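(* Consider the following single machine scheduling problem. A set $N = N_1 \cup N_2$ of $n$ jobs ($N_1\cap N_2=\emptyset$) is to be processed on a single machine from time $0$ on, the machine processing at most one job at a time, without preemption. Each job $j$ has processing time $p_j = p$ (the same value $p>0$ for all jobs), a release date $r_j > 0$ (job $j$ cannot start before $r_j$), a due date $d_j$ and a weight $w_j \ge 0$. The jobs of $N_1 = \{j^1_1,\dots,j^1_{n_1}\}$ form a chain $j^1_1 \to j^1_2 \to \dots \to j^1_{n_1}$ and the jobs of $N_2=\{i_1,\dots,i_{n_2}\}$ form a chain $i_1\to i_2\to\dots\to i_{n_2}$, where $j \to i$ means job $j$ must be processed before job $i$. For a feasible schedule, let $C_j$ be the completion time of job $j$ and $T_j=\max\{0, C_j - d_j\}$ its tardiness. Then, for each of the objectives $f = \sum_{j\in N} w_j C_j$ and $f = \sum_{j\in N} w_j T_j$, the problem of finding a feasible schedule minimizing $f$ (denoted $1|2\ chains, p_j=p, r_j|f$) can be solved by a dynamic programming algorithm in $O(n^5)$ time.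
   Context: Schedules are given by a permutation of the jobs respecting both chains; each job starts at the maximum of its release date and the completion time of the previous job in the permutation. *)

theory Defs
  imports Main "HOL.Real"
begin

text \<open>An instance: chain 1 consists of jobs J1 0, ..., J1 (n1-1) (in chain order),
  chain 2 of jobs J2 0, ..., J2 (n2-1). Common processing time pt.\<close>

record inst =
  n1 :: nat
  n2 :: nat
  pt :: real
  r1 :: "nat \<Rightarrow> real"
  d1 :: "nat \<Rightarrow> real"
  w1 :: "nat \<Rightarrow> real"
  r2 :: "nat \<Rightarrow> real"
  d2 :: "nat \<Rightarrow> real"
  w2 :: "nat \<Rightarrow> real"

datatype job = J1 nat | J2 nat

fun rel :: "inst \<Rightarrow> job \<Rightarrow> real" where
  "rel I (J1 k) = r1 I k" | "rel I (J2 k) = r2 I k"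
fun due :: "inst \<Rightarrow> job \<Rightarrow> real" where
  "due I (J1 k) = d1 I k" | "due I (J2 k) = d2 I k"
fun wt :: "inst \<Rightarrow> job \<Rightarrow> real" where
  "wt I (J1 k) = w1 I k" | "wt I (J2 k) = w2 I k"

definition jobs :: "inst \<Rightarrow> job set" where
  "jobs I = {J1 k | k. k < n1 I} \<union> {J2 k | k. k < n2 I}"

definition admissible :: "inst \<Rightarrow> bool" where
  "admissible I \<longleftrightarrow> pt I > 0
     \<and> (\<forall>k < n1 I. r1 I k > 0 \<and> w1 I k \<ge> 0)
     \<and> (\<forall>k < n2 I. r2 I k > 0 \<and> w2 I k \<ge> 0)"

definition valid_seq :: "inst \<Rightarrow> job list \<Rightarrow> bool" where
  "valid_seq I \<pi> \<longleftrightarrow> distinct \<pi> \<and> set \<pi> = jobs I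
     \<and> (\<forall>a b. a < b \<and> b < n1 I \<longrightarrow> (\<exists>i j. i < j \<and> j < length \<pi> \<and> \<pi> ! i = J1 a \<and> \<pi> ! j = J1 b))
     \<and> (\<forall>a b. a < b \<and> b < n2 I \<longrightarrow> (\<exists>i j. i < j \<and> j < length \<pi> \<and> \<pi> ! i = J2 a \<and> \<pi> ! j = J2 b))"

fun ctimes :: "inst \<Rightarrow> real \<Rightarrow> job list \<Rightarrow> real list" where
  "ctimes I t [] = []"
| "ctimes I t (j # js) = (let C = max t (rel I j) + pt I in C # ctimes I C js)"

datatype objective = WeightedCompletion | WeightedTardiness

fun cost :: "objective \<Rightarrow> inst \<Rightarrow> job \<Rightarrow> real \<Rightarrow> real" where
  "cost WeightedCompletion I j C = wt I j * C"
| "cost WeightedTardiness I j C = wt I j * max 0 (C - due I j)"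

definition obj_val :: "objective \<Rightarrow> inst \<Rightarrow> job list \<Rightarrow> real" where
  "obj_val ob I \<pi> = (\<Sum>(j, C) \<leftarrow> zip \<pi> (ctimes I 0 \<pi>). cost ob I j C)"

definition optimal_seq :: "objective \<Rightarrow> inst \<Rightarrow> job list \<Rightarrow> bool" where
  "optimal_seq ob I \<pi> \<longleftrightarrow> valid_seq I \<pi>
     \<and> (\<forall>\<sigma>. valid_seq I \<sigma> \<longrightarrow> obj_val ob I \<pi> \<le> obj_val ob I \<sigma>)"

type_synonym mem = "nat \<Rightarrow> real"

datatype expr = Const int | Ld expr | Add expr expr | Sub expr expr | Mul expr expr
datatype bexp = Less expr expr | Eq expr expr | BNot bexp | And bexp bexp
datatype com = Skip | Store expr expr | Seq com com | If bexp com com | While bexp com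

fun eval :: "expr \<Rightarrow> mem \<Rightarrow> real option" where
  "eval (Const i) m = Some (of_int i)"
| "eval (Ld e) m = (case eval e m of None \<Rightarrow> None
     | Some v \<Rightarrow> if v \<in> \<nat> then Some (m (nat \<lfloor>v\<rfloor>)) else None)"
| "eval (Add a b) m = (case (eval a m, eval b m) of (Some x, Some y) \<Rightarrow> Some (x + y) | _ \<Rightarrow> None)"
| "eval (Sub a b) m = (case (eval a m, eval b m) of (Some x, Some y) \<Rightarrow> Some (x - y) | _ \<Rightarrow> None)"
| "eval (Mul a b) m = (case (eval a m, eval b m) of (Some x, Some y) \<Rightarrow> Some (x * y) | _ \<Rightarrow> None)"

fun beval :: "bexp \<Rightarrow> mem \<Rightarrow> bool option" where
  "beval (Less a b) m = (case (eval a m, eval b m) of (Some x, Some y) \<Rightarrow> Some (x < y) | _ \<Rightarrow> None)"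
| "beval (Eq a b) m = (case (eval a m, eval b m) of (Some x, Some y) \<Rightarrow> Some (x = y) | _ \<Rightarrow> None)"
| "beval (BNot b) m = map_option Not (beval b m)"
| "beval (And a b) m = (case (beval a m, beval b m) of (Some x, Some y) \<Rightarrow> Some (x \<and> y) | _ \<Rightarrow> None)"

inductive exec :: "com \<Rightarrow> mem \<Rightarrow> nat \<Rightarrow> mem \<Rightarrow> bool" where
  ExSkip: "exec Skip m 1 m"
| ExStore: "\<lbrakk>eval a m = Some va; va \<in> \<nat>; eval e m = Some v\<rbrakk>
     \<Longrightarrow> exec (Store a e) m 1 (m(nat \<lfloor>va\<rfloor> := v))"
| ExSeq: "\<lbrakk>exec c1 m k1 m1; exec c2 m1 k2 m2\<rbrakk> \<Longrightarrow> exec (Seq c1 c2) m (k1 + k2) m2"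
| ExIfT: "\<lbrakk>beval b m = Some True; exec c1 m k m'\<rbrakk> \<Longrightarrow> exec (If b c1 c2) m (k + 1) m'"
| ExIfF: "\<lbrakk>beval b m = Some False; exec c2 m k m'\<rbrakk> \<Longrightarrow> exec (If b c1 c2) m (k + 1) m'"
| ExWhileF: "beval b m = Some False \<Longrightarrow> exec (While b c) m 1 m"
| ExWhileT: "\<lbrakk>beval b m = Some True; exec c m k1 m1; exec (While b c) m1 k2 m2\<rbrakk>
     \<Longrightarrow> exec (While b c) m (k1 + k2 + 1) m2"

text \<open>Input encoding: cell 0 = n1, cell 1 = n2, cell 2 = p; then for chain 1 (in chain
  order) the triples (r, d, w) starting at cell 3, then the triples of chain 2; all other
  cells are 0.\<close>
definition input_mem :: "inst \<Rightarrow> mem" where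
  "input_mem I a =
    (if a = 0 then real (n1 I)
     else if a = 1 then real (n2 I)
     else if a = 2 then pt I
     else if a < 3 + 3 * n1 I then
       (let k = (a - 3) div 3 in
        if (a - 3) mod 3 = 0 then r1 I k else if (a - 3) mod 3 = 1 then d1 I k else w1 I k)
     else if a < 3 + 3 * n1 I + 3 * n2 I then
       (let b = a - 3 - 3 * n1 I; k = b div 3 in
        if b mod 3 = 0 then r2 I k else if b mod 3 = 1 then d2 I k else w2 I k)
     else 0)"

fun enc_job :: "job \<Rightarrow> real" where
  "enc_job (J1 k) = real k + 1"
| "enc_job (J2 k) = - (real k + 1)"

end

(* When the jobs are processed in a fixed order as early as possible, each completion time
   has the form r + l p, where r is 0 or a release date and l is at most the number of jobs
   scheduled so far. The cost of an optimal completion of a partial schedule therefore depends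
   only on the numbers i and j of jobs already taken from the two chains and on such a time
   (k, l): O(n^4) states, each with at most two successors, namely the next job of either chain.
   The recursion opt_cost over these states is a lower bound for the cost of every interleaving
   of the chains, and the interleaving that follows its minimising choices attains it.
   A real-RAM program fills the table of opt_cost with constant work per entry and then replays
   the minimising choices, in O(n^4) steps, well within the claimed O(n^5). *)

theory Submission
  imports Defs
begin

section \<open>The dynamic program\<close>

type_synonym slot = "nat \<times> nat"
type_synonym state = "nat \<times> nat \<times> slot"

definition dim :: "inst \<Rightarrow> nat" where
  "dim I = n1 I + n2 I + 1"

fun job_index :: "inst \<Rightarrow> job \<Rightarrow> nat" where
  "job_index I (J1 a) = a + 1"
| "job_index I (J2 b) = n1 I + b + 1"

lemma input_mem_job_index:
  assumes "x \<in> jobs I"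
  shows "input_mem I (3 * job_index I x) = rel I x"
    and "input_mem I (3 * job_index I x + 1) = due I x"
    and "input_mem I (3 * job_index I x + 2) = wt I x"
proof -
  have dm: "(3 * a) div 3 = a" "(3 * a + 1) div 3 = a" "(3 * a + 2) div 3 = a"
    "(3 * a) mod 3 = 0" "(3 * a + 1) mod 3 = 1" "(3 * a + 2) mod 3 = 2" for a :: nat
    by presburger+
  have "input_mem I (3 * job_index I x) = rel I x \<and> input_mem I (3 * job_index I x + 1) = due I x
      \<and> input_mem I (3 * job_index I x + 2) = wt I x"
  proof (cases x)
    case (J1 a)
    have idx: "3 * (a + 1) - 3 = 3 * a" "3 * (a + 1) + 1 - 3 = 3 * a + 1" "3 * (a + 1) + 2 - 3 = 3 * a + 2"
      by simp_all
    from assms J1 have "a < n1 I" by (auto simp: jobs_def)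
    then show ?thesis unfolding J1 input_mem_def Let_def job_index.simps idx dm by simp
  next
    case (J2 b)
    have idx: "3 * (n1 I + b + 1) - 3 - 3 * n1 I = 3 * b" "3 * (n1 I + b + 1) + 1 - 3 - 3 * n1 I = 3 * b + 1"
      "3 * (n1 I + b + 1) + 2 - 3 - 3 * n1 I = 3 * b + 2"
      by simp_all
    from assms J2 have "b < n2 I" by (auto simp: jobs_def)
    then show ?thesis unfolding J2 input_mem_def Let_def job_index.simps idx dm by simp
  qed
  then show "input_mem I (3 * job_index I x) = rel I x" "input_mem I (3 * job_index I x + 1) = due I x"
    "input_mem I (3 * job_index I x + 2) = wt I x" by simp_all
qed

(* (k, l) encodes the time r + l p, where r is the release date of the job with index k
   (held in input cell 3 k), or 0 for k = 0. *)
fun slot_time :: "inst \<Rightarrow> slot \<Rightarrow> real" where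
  "slot_time I (k, l) = (if k = 0 then 0 else input_mem I (3 * k)) + real l * pt I"

fun slot_next :: "inst \<Rightarrow> job \<Rightarrow> slot \<Rightarrow> slot" where
  "slot_next I x (k, l) = (if slot_time I (k, l) < rel I x then (job_index I x, 1) else (k, l + 1))"

fun after :: "inst \<Rightarrow> job \<Rightarrow> state \<Rightarrow> state" where
  "after I (J1 a) (i, j, t) = (i + 1, j, slot_next I (J1 a) t)"
| "after I (J2 b) (i, j, t) = (i, j + 1, slot_next I (J2 b) t)"

fun state_time :: "inst \<Rightarrow> state \<Rightarrow> real" where
  "state_time I (i, j, t) = slot_time I t"

lemma state_time_after:
  assumes "x \<in> jobs I"
  shows "state_time I (after I x s) = max (state_time I s) (rel I x) + pt I"
proof -
  have "0 < job_index I x" by (cases x) simp_all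
  then show ?thesis using input_mem_job_index(1)[OF assms]
    by (cases x; cases s) (auto simp: algebra_simps)
qed

abbreviation append_cost :: "objective \<Rightarrow> inst \<Rightarrow> (state \<Rightarrow> real) \<Rightarrow> job \<Rightarrow> state \<Rightarrow> real" where
  "append_cost ob I V x s \<equiv> cost ob I x (state_time I (after I x s)) + V (after I x s)"

(* The guard snd t + 1 < dim I never fires on consistent states; it keeps all table
   indices of the program below dim I. *)
function opt_cost :: "objective \<Rightarrow> inst \<Rightarrow> state \<Rightarrow> real" where
  "opt_cost ob I (i, j, t) =
     (if snd t + 1 < dim I then
        (if i < n1 I then
           (if j < n2 I then min (append_cost ob I (opt_cost ob I) (J1 i) (i, j, t))
                                 (append_cost ob I (opt_cost ob I) (J2 j) (i, j, t))
            else append_cost ob I (opt_cost ob I) (J1 i) (i, j, t))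
         else if j < n2 I then append_cost ob I (opt_cost ob I) (J2 j) (i, j, t) else 0)
      else 0)"
  by pat_completeness auto
termination
  by (relation "measure (\<lambda>(ob, I, i, j, _). n1 I - i + (n2 I - j))") (auto split: prod.splits)

declare opt_cost.simps [simp del]

fun available :: "inst \<Rightarrow> state \<Rightarrow> job \<Rightarrow> bool" where
  "available I (i, j, _) x \<longleftrightarrow> x = J1 i \<and> i < n1 I \<or> x = J2 j \<and> j < n2 I"

lemma available_in_jobs: "available I s x \<Longrightarrow> x \<in> jobs I"
  by (cases s) (auto simp: jobs_def)

definition consistent_state :: "inst \<Rightarrow> state \<Rightarrow> bool" where
  "consistent_state I s \<longleftrightarrow> (case s of (i, j, k, l) \<Rightarrow> i \<le> n1 I \<and> j \<le> n2 I \<and> l \<le> i + j \<and> k < dim I)"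

lemma consistent_state_after:
  "consistent_state I s \<Longrightarrow> available I s x \<Longrightarrow> consistent_state I (after I x s)"
  by (cases s; cases x) (auto simp: consistent_state_def dim_def split: if_splits)

lemma opt_cost_finished: "\<forall>x. \<not> available I s x \<Longrightarrow> opt_cost ob I s = 0"
  by (cases s) (simp add: opt_cost.simps)

lemma opt_cost_le_append_cost:
  "consistent_state I s \<Longrightarrow> available I s x \<Longrightarrow> opt_cost ob I s \<le> append_cost ob I (opt_cost ob I) x s"
  by (cases s) (clarify, subst opt_cost.simps, auto simp: consistent_state_def dim_def)

definition next_job :: "objective \<Rightarrow> inst \<Rightarrow> state \<Rightarrow> job option" where
  "next_job ob I s = (case s of (i, j, _) \<Rightarrow>
     if j < n2 I \<and> (\<not> i < n1 I
          \<or> append_cost ob I (opt_cost ob I) (J2 j) s < append_cost ob I (opt_cost ob I) (J1 i) s)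
     then Some (J2 j) else if i < n1 I then Some (J1 i) else None)"

lemma next_job_Some: "next_job ob I s = Some x \<Longrightarrow> available I s x"
  by (cases s) (auto simp: next_job_def split: if_splits)

lemma next_job_None: "next_job ob I s = None \<longleftrightarrow> (\<forall>x. \<not> available I s x)"
  by (cases s) (auto simp: next_job_def)

lemma opt_cost_eq_next_job:
  "snd t + 1 < dim I \<Longrightarrow> opt_cost ob I (i, j, t) =
     (case next_job ob I (i, j, t) of None \<Rightarrow> 0 | Some x \<Rightarrow> append_cost ob I (opt_cost ob I) x (i, j, t))"
  by (subst opt_cost.simps) (auto simp: next_job_def min_def)

lemma opt_cost_next_job:
  assumes "consistent_state I s" "next_job ob I s = Some x"
  shows "opt_cost ob I s = append_cost ob I (opt_cost ob I) x s"
proof -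
  obtain i j t where s: "s = (i, j, t)" by (cases s)
  have "available I s x" using assms(2) by (rule next_job_Some)
  then have "snd t + 1 < dim I" using assms(1) s by (cases t) (auto simp: consistent_state_def dim_def)
  then show ?thesis using assms(2) s by (simp add: opt_cost_eq_next_job)
qed

function opt_seq :: "objective \<Rightarrow> inst \<Rightarrow> state \<Rightarrow> job list" where
  "opt_seq ob I s = (case next_job ob I s of None \<Rightarrow> [] | Some x \<Rightarrow> x # opt_seq ob I (after I x s))"
  by pat_completeness auto
termination
  by (relation "measure (\<lambda>(ob, I, i, j, _). n1 I - i + (n2 I - j))")
     (auto dest!: next_job_Some elim!: available.elims)

declare opt_seq.simps [simp del]

section \<open>Optimality\<close>

fun schedule_cost :: "objective \<Rightarrow> inst \<Rightarrow> real \<Rightarrow> job list \<Rightarrow> real" where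
  "schedule_cost ob I t [] = 0"
| "schedule_cost ob I t (x # xs) =
     cost ob I x (max t (rel I x) + pt I) + schedule_cost ob I (max t (rel I x) + pt I) xs"

lemma schedule_cost_eq_sum: "schedule_cost ob I t xs = (\<Sum>(j, C) \<leftarrow> zip xs (ctimes I t xs). cost ob I j C)"
  by (induction xs arbitrary: t) (auto simp: Let_def)

lemma schedule_cost_Cons_after:
  "x \<in> jobs I \<Longrightarrow> schedule_cost ob I (state_time I s) (x # xs)
     = append_cost ob I (\<lambda>s'. schedule_cost ob I (state_time I s') xs) x s"
  by (simp add: state_time_after)

fun is_J1 :: "job \<Rightarrow> bool" where
  "is_J1 (J1 _) = True"
| "is_J1 (J2 _) = False"

fun interleaving :: "inst \<Rightarrow> state \<Rightarrow> job list \<Rightarrow> bool" where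
  "interleaving I (i, j, _) xs \<longleftrightarrow>
     filter is_J1 xs = map J1 [i..<n1 I] \<and> filter (Not \<circ> is_J1) xs = map J2 [j..<n2 I]"

lemma interleaving_Nil: "interleaving I s [] \<longleftrightarrow> (\<forall>x. \<not> available I s x)"
  by (cases s) auto

lemma interleaving_Cons:
  "interleaving I s (x # xs) \<longleftrightarrow> available I s x \<and> interleaving I (after I x s) xs"
  by (cases s; cases x) (auto simp: upt_eq_Cons_conv upt_conv_Cons)

lemma opt_cost_le_schedule_cost:
  "consistent_state I s \<Longrightarrow> interleaving I s xs \<Longrightarrow> opt_cost ob I s \<le> schedule_cost ob I (state_time I s) xs"
proof (induction xs arbitrary: s)
  case Nil
  then show ?case by (simp add: interleaving_Nil opt_cost_finished)
next
  case (Cons x xs)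
  then have x: "available I s x" and rest: "interleaving I (after I x s) xs"
    by (simp_all add: interleaving_Cons)
  have "opt_cost ob I s \<le> append_cost ob I (opt_cost ob I) x s"
    using Cons.prems(1) x by (rule opt_cost_le_append_cost)
  also have "\<dots> \<le> schedule_cost ob I (state_time I s) (x # xs)"
    unfolding schedule_cost_Cons_after[OF available_in_jobs[OF x]]
    using Cons.IH[OF consistent_state_after[OF Cons.prems(1) x] rest] by simp
  finally show ?case .
qed

lemma opt_seq_interleaving_cost:
  "consistent_state I s \<Longrightarrow>
     interleaving I s (opt_seq ob I s) \<and> schedule_cost ob I (state_time I s) (opt_seq ob I s) = opt_cost ob I s"
proof (induction ob I s rule: opt_seq.induct)
  case (1 ob I s)
  show ?case
  proof (cases "next_job ob I s")
    case None
    then have "opt_seq ob I s = []" by (subst opt_seq.simps) simp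
    then show ?thesis using None by (simp add: interleaving_Nil next_job_None opt_cost_finished)
  next
    case (Some x)
    have x: "available I s x" using Some by (rule next_job_Some)
    have IH: "interleaving I (after I x s) (opt_seq ob I (after I x s))"
      "schedule_cost ob I (state_time I (after I x s)) (opt_seq ob I (after I x s)) = opt_cost ob I (after I x s)"
      using "1.IH"[OF Some consistent_state_after[OF "1.prems" x]] by simp_all
    have "opt_seq ob I s = x # opt_seq ob I (after I x s)"
      using Some by (subst opt_seq.simps) simp
    then show ?thesis
      unfolding opt_cost_next_job[OF "1.prems" Some]
      using x IH by (simp only: interleaving_Cons schedule_cost_Cons_after[OF available_in_jobs[OF x]])
  qed
qed

definition precedes :: "'a list \<Rightarrow> 'a \<Rightarrow> 'a \<Rightarrow> bool" where
  "precedes xs x y \<longleftrightarrow> (\<exists>i j. i < j \<and> j < length xs \<and> xs ! i = x \<and> xs ! j = y)"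

lemma precedes_Cons: "precedes (z # zs) x y \<longleftrightarrow> z = x \<and> y \<in> set zs \<or> precedes zs x y"
proof
  assume "precedes (z # zs) x y"
  then obtain i j where ij: "i < j" "j < length (z # zs)" "(z # zs) ! i = x" "(z # zs) ! j = y"
    unfolding precedes_def by blast
  then obtain j' where j: "j = Suc j'" by (cases j) auto
  show "z = x \<and> y \<in> set zs \<or> precedes zs x y"
  proof (cases i)
    case 0
    then show ?thesis using ij j by auto
  next
    case (Suc i')
    then show ?thesis using ij j unfolding precedes_def by auto
  qed
next
  assume "z = x \<and> y \<in> set zs \<or> precedes zs x y"
  then show "precedes (z # zs) x y"
  proof
    assume "z = x \<and> y \<in> set zs"
    then obtain j where "j < length zs" "zs ! j = y" by (auto simp: in_set_conv_nth)
    then show ?thesis using \<open>z = x \<and> y \<in> set zs\<close> unfolding precedes_def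
      by (intro exI[of _ 0] exI[of _ "Suc j"]) auto
  next
    assume "precedes zs x y"
    then show ?thesis unfolding precedes_def by (metis Suc_less_eq length_Cons nth_Cons_Suc)
  qed
qed

lemma precedes_filter_iff: "P x \<Longrightarrow> P y \<Longrightarrow> precedes (filter P xs) x y \<longleftrightarrow> precedes xs x y"
  by (induction xs) (auto simp: precedes_Cons)

lemma precedes_map_upt: "a < b \<Longrightarrow> b < n \<Longrightarrow> precedes (map C [0..<n]) (C a) (C b)"
  unfolding precedes_def by (intro exI[of _ a] exI[of _ b]) simp

lemma eq_map_upt_if_precedes:
  assumes "distinct ys" "set ys = C ` {0..<n}" "inj C"
    and "\<And>a b. a < b \<Longrightarrow> b < n \<Longrightarrow> precedes ys (C a) (C b)"
  shows "ys = map C [0..<n]"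
  using assms
proof (induction ys arbitrary: C n)
  case Nil
  then show ?case by simp
next
  case (Cons z zs)
  then obtain c where c: "c < n" "z = C c" by (metis atLeastLessThan_iff imageE list.set_intros(1))
  have "c = 0"
  proof (rule ccontr)
    assume "c \<noteq> 0"
    then have "precedes (z # zs) (C 0) z" using Cons.prems(4) c by simp
    then show False using Cons.prems(1) by (auto simp: precedes_Cons dest: precedes_def[THEN iffD1]
      intro: nth_mem)
  qed
  obtain n' where n: "n = Suc n'" using c by (cases n) auto
  have "set zs = (C \<circ> Suc) ` {0..<n'}"
  proof -
    have "set zs = set (z # zs) - {z}" using Cons.prems(1) by auto
    also have "\<dots> = C ` {0..<n} - C ` {0}" using Cons.prems(2) c \<open>c = 0\<close> by simp
    also have "\<dots> = C ` ({0..<n} - {0})" using Cons.prems(3) by (simp add: image_set_diff)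
    also have "\<dots> = C ` Suc ` {0..<n'}" proof -
      have "{0..<n} - {0} = {Suc 0..<n}" using n by auto
      then show ?thesis using n by (simp add: image_Suc_atLeastLessThan)
    qed
    finally show ?thesis by (simp only: image_comp)
  qed
  moreover have "precedes zs ((C \<circ> Suc) a) ((C \<circ> Suc) b)" if "a < b" "b < n'" for a b
  proof -
    have "C (Suc a) \<noteq> z" using c \<open>c = 0\<close> Cons.prems(3) by (auto dest: injD)
    then show ?thesis using Cons.prems(4)[of "Suc a" "Suc b"] that n by (simp add: precedes_Cons)
  qed
  ultimately have "zs = map (C \<circ> Suc) [0..<n']"
    using Cons.prems(1,3) by (intro Cons.IH) (auto simp: inj_def)
  moreover have "map C [0..<n] = C 0 # map (C \<circ> Suc) [0..<n']"
    using n by (simp del: upt_Suc add: upt_conv_Cons flip: map_Suc_upt)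
  ultimately show ?case using c \<open>c = 0\<close> by simp
qed

lemma distinct_if_distinct_filters:
  "distinct (filter P xs) \<Longrightarrow> distinct (filter (Not \<circ> P) xs) \<Longrightarrow> distinct xs"
  by (induction xs) (auto split: if_splits)

lemma valid_seq_precedes:
  "valid_seq I xs \<longleftrightarrow> distinct xs \<and> set xs = jobs I
     \<and> (\<forall>a b. a < b \<and> b < n1 I \<longrightarrow> precedes xs (J1 a) (J1 b))
     \<and> (\<forall>a b. a < b \<and> b < n2 I \<longrightarrow> precedes xs (J2 a) (J2 b))"
  by (simp add: valid_seq_def precedes_def)

lemma valid_seq_iff_interleaving: "valid_seq I xs \<longleftrightarrow> interleaving I (0, 0, 0, 0) xs"
proof
  assume valid: "valid_seq I xs"
  then have d: "distinct xs" and st: "set xs = jobs I" by (simp_all add: valid_seq_precedes)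
  have "filter is_J1 xs = map J1 [0..<n1 I]"
  proof (rule eq_map_upt_if_precedes)
    show "set (filter is_J1 xs) = J1 ` {0..<n1 I}" using st by (auto simp: jobs_def elim: is_J1.elims)
    show "precedes (filter is_J1 xs) (J1 a) (J1 b)" if "a < b" "b < n1 I" for a b
      using valid that by (simp add: precedes_filter_iff valid_seq_precedes)
  qed (use d in \<open>simp_all add: inj_def\<close>)
  moreover have "filter (Not \<circ> is_J1) xs = map J2 [0..<n2 I]"
  proof (rule eq_map_upt_if_precedes)
    show "set (filter (Not \<circ> is_J1) xs) = J2 ` {0..<n2 I}" using st by (auto simp: jobs_def elim: is_J1.elims)
    show "precedes (filter (Not \<circ> is_J1) xs) (J2 a) (J2 b)" if "a < b" "b < n2 I" for a b
      using valid that by (simp add: precedes_filter_iff valid_seq_precedes)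
  qed (use d in \<open>simp_all add: inj_def\<close>)
  ultimately show "interleaving I (0, 0, 0, 0) xs" by simp
next
  assume "interleaving I (0, 0, 0, 0) xs"
  then have f1: "filter is_J1 xs = map J1 [0..<n1 I]" and f2: "filter (Not \<circ> is_J1) xs = map J2 [0..<n2 I]"
    by simp_all
  have "distinct xs"
    by (rule distinct_if_distinct_filters[of is_J1]) (simp_all add: f1 f2 distinct_map inj_on_def)
  moreover have "set xs = jobs I"
  proof -
    have "set xs = set (filter is_J1 xs) \<union> set (filter (Not \<circ> is_J1) xs)" by auto
    then show ?thesis unfolding f1 f2 jobs_def by auto
  qed
  moreover have "precedes xs (J1 a) (J1 b)" if "a < b" "b < n1 I" for a b
    using precedes_map_upt[OF that, of J1] precedes_filter_iff[of is_J1 "J1 a" "J1 b" xs] by (simp add: f1)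
  moreover have "precedes xs (J2 a) (J2 b)" if "a < b" "b < n2 I" for a b
    using precedes_map_upt[OF that, of J2] precedes_filter_iff[of "Not \<circ> is_J1" "J2 a" "J2 b" xs]
    by (simp add: f2)
  ultimately show "valid_seq I xs" by (simp add: valid_seq_precedes)
qed

theorem opt_seq_optimal: "optimal_seq ob I (opt_seq ob I (0, 0, 0, 0))"
proof -
  have start: "consistent_state I (0, 0, 0, 0)" "state_time I (0, 0, 0, 0) = 0"
    by (simp_all add: consistent_state_def dim_def)
  have obj: "obj_val ob I xs = schedule_cost ob I (state_time I (0, 0, 0, 0)) xs" for xs
    by (simp add: obj_val_def schedule_cost_eq_sum start)
  show ?thesis unfolding optimal_seq_def obj
    using opt_seq_interleaving_cost[OF start(1)] opt_cost_le_schedule_cost[OF start(1)]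
    by (simp add: valid_seq_iff_interleaving)
qed

definition opt_step :: "objective \<Rightarrow> inst \<Rightarrow> state \<Rightarrow> state" where
  "opt_step ob I s = after I (the (next_job ob I s)) s"

lemma opt_seq_nth:
  "q < length (opt_seq ob I s) \<Longrightarrow> opt_seq ob I s ! q = the (next_job ob I ((opt_step ob I ^^ q) s))"
proof (induction q arbitrary: s)
  case 0
  then show ?case by (subst (asm) opt_seq.simps, subst opt_seq.simps) (auto split: option.splits)
next
  case (Suc q)
  then obtain x where x: "next_job ob I s = Some x"
    by (subst (asm) opt_seq.simps) (auto split: option.splits)
  then have "opt_seq ob I s = x # opt_seq ob I (opt_step ob I s)"
    by (subst opt_seq.simps) (simp add: opt_step_def)
  then show ?case using Suc by (simp add: funpow_Suc_right del: funpow.simps)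
qed

lemma length_opt_seq: "length (opt_seq ob I (0, 0, 0, 0)) = n1 I + n2 I"
proof -
  have "interleaving I (0, 0, 0, 0) (opt_seq ob I (0, 0, 0, 0))"
    using opt_seq_interleaving_cost[of I "(0, 0, 0, 0)"] by (simp add: consistent_state_def dim_def)
  then show ?thesis using sum_length_filter_compl[of is_J1 "opt_seq ob I (0, 0, 0, 0)"]
    by (simp add: comp_def)
qed

fun progress :: "state \<Rightarrow> nat" where
  "progress (i, j, _) = i + j"

lemma opt_step_path:
  "t \<le> n1 I + n2 I \<Longrightarrow> consistent_state I ((opt_step ob I ^^ t) (0, 0, 0, 0))
     \<and> progress ((opt_step ob I ^^ t) (0, 0, 0, 0)) = t"
proof (induction t)
  case 0
  then show ?case by (simp add: consistent_state_def dim_def)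
next
  case (Suc t)
  obtain i j k l where s: "(opt_step ob I ^^ t) (0, 0, 0, 0) = (i, j, k, l)" by (cases "(opt_step ob I ^^ t) (0, 0, 0, 0)")
  with Suc have c: "consistent_state I (i, j, k, l)" "i + j = t" by simp_all
  with Suc.prems have "i < n1 I \<or> j < n2 I" by (auto simp: consistent_state_def)
  then obtain x where x: "next_job ob I (i, j, k, l) = Some x"
    by (cases "next_job ob I (i, j, k, l)") (auto simp: next_job_None)
  have avail: "available I (i, j, k, l) x" using x by (rule next_job_Some)
  have "(opt_step ob I ^^ Suc t) (0, 0, 0, 0) = after I x (i, j, k, l)"
    by (simp only: funpow.simps(2) comp_apply s) (simp add: opt_step_def x)
  then show ?case using consistent_state_after[OF c(1) avail] avail c(2) by (cases x) auto
qed


section \<open>Executions with step bounds\<close>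

fun run_loop_free :: "com \<Rightarrow> mem \<Rightarrow> (nat \<times> mem) option" where
  "run_loop_free Skip m = Some (1, m)"
| "run_loop_free (Store a e) m = (case (eval a m, eval e m) of (Some va, Some v) \<Rightarrow>
      if va \<in> \<nat> then Some (1, m(nat \<lfloor>va\<rfloor> := v)) else None | _ \<Rightarrow> None)"
| "run_loop_free (Seq c1 c2) m = (case run_loop_free c1 m of None \<Rightarrow> None | Some (k1, m1) \<Rightarrow>
      (case run_loop_free c2 m1 of None \<Rightarrow> None | Some (k2, m2) \<Rightarrow> Some (k1 + k2, m2)))"
| "run_loop_free (If b c1 c2) m = (case beval b m of None \<Rightarrow> None
      | Some True \<Rightarrow> (case run_loop_free c1 m of None \<Rightarrow> None | Some (k, m') \<Rightarrow> Some (k + 1, m'))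
      | Some False \<Rightarrow> (case run_loop_free c2 m of None \<Rightarrow> None | Some (k, m') \<Rightarrow> Some (k + 1, m')))"
| "run_loop_free (While b c) m = None"

lemma exec_if_run_loop_free: "run_loop_free c m = Some (k, m') \<Longrightarrow> exec c m k m'"
proof (induction c arbitrary: m k m')
  case Skip
  then show ?case using exec.ExSkip by simp
next
  case (Store a e)
  then obtain va v where "eval a m = Some va" "eval e m = Some v" "va \<in> \<nat>" "k = 1"
      "m' = m(nat \<lfloor>va\<rfloor> := v)"
    by (auto split: option.splits if_splits)
  then show ?case by (metis exec.ExStore)
next
  case (Seq c1 c2)
  then show ?case by (auto split: option.splits intro!: exec.ExSeq)
next
  case (If b c1 c2)
  then show ?case
    by (auto split: option.splits bool.splits
        intro: exec.ExIfT[unfolded Suc_eq_plus1[symmetric]] exec.ExIfF[unfolded Suc_eq_plus1[symmetric]])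
qed simp

definition exec_within :: "com \<Rightarrow> mem \<Rightarrow> nat \<Rightarrow> (mem \<Rightarrow> bool) \<Rightarrow> bool" where
  "exec_within c m K Q \<longleftrightarrow> (\<exists>k m'. exec c m k m' \<and> k \<le> K \<and> Q m')"

lemma exec_within_run:
  "run_loop_free c m = Some (k, m') \<Longrightarrow> k \<le> K \<Longrightarrow> Q m' \<Longrightarrow> exec_within c m K Q"
  unfolding exec_within_def by (blast intro: exec_if_run_loop_free)

lemma exec_within_mono:
  "exec_within c m K Q \<Longrightarrow> K \<le> K' \<Longrightarrow> (\<And>m'. Q m' \<Longrightarrow> Q' m') \<Longrightarrow> exec_within c m K' Q'"
  unfolding exec_within_def by (meson order_trans)

lemma exec_within_Seq:
  "exec_within c1 m K1 Q1 \<Longrightarrow> (\<And>m1. Q1 m1 \<Longrightarrow> exec_within c2 m1 K2 Q)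
     \<Longrightarrow> exec_within (Seq c1 c2) m (K1 + K2) Q"
  unfolding exec_within_def by (meson add_le_mono exec.ExSeq)

lemma exec_within_IfT:
  "beval b m = Some True \<Longrightarrow> exec_within c1 m K Q \<Longrightarrow> exec_within (If b c1 c2) m (K + 1) Q"
  unfolding exec_within_def by (metis Suc_eq_plus1 Suc_le_mono exec.ExIfT)

lemma exec_within_While:
  assumes body: "\<And>t m. t < n \<Longrightarrow> P t m \<Longrightarrow> beval b m = Some True \<and> exec_within c m K (P (Suc t))"
    and stop: "\<And>m. P n m \<Longrightarrow> beval b m = Some False"
  shows "P 0 m \<Longrightarrow> exec_within (While b c) m (n * (K + 1) + 1) (P n)"
proof -
  have "exec_within (While b c) m ((n - t) * (K + 1) + 1) (P n)" if "t \<le> n" "P t m" for t m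
    using that
  proof (induction "n - t" arbitrary: t m)
    case 0
    then have "t = n" by simp
    with 0 show ?case using stop exec.ExWhileF unfolding exec_within_def by fastforce
  next
    case (Suc d)
    then have t: "t < n" by simp
    from body[OF t Suc.prems(2)] obtain k1 m1 where
      b: "beval b m = Some True" and c: "exec c m k1 m1" "k1 \<le> K" "P (Suc t) m1"
      unfolding exec_within_def by blast
    have "exec_within (While b c) m1 ((n - Suc t) * (K + 1) + 1) (P n)"
      using Suc.hyps(1)[of "Suc t" m1] Suc.hyps(2) t c(3) by simp
    then obtain k2 m2 where
      w: "exec (While b c) m1 k2 m2" "k2 \<le> (n - Suc t) * (K + 1) + 1" "P n m2"
      unfolding exec_within_def by blast
    have "n - t = Suc (n - Suc t)" using t by simp
    then have "(n - t) * (K + 1) = (K + 1) + (n - Suc t) * (K + 1)" by simp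
    then have "k1 + k2 + 1 \<le> (n - t) * (K + 1) + 1"
      using c(2) w(2) by linarith
    then show ?case using exec.ExWhileT[OF b c(1) w(1)] w(3) unfolding exec_within_def by blast
  qed
  then show "P 0 m \<Longrightarrow> exec_within (While b c) m (n * (K + 1) + 1) (P n)" by fastforce
qed

section \<open>Memory layout\<close>

lemma nat_int_add_numeral [simp]: "nat (int a + numeral k) = a + numeral k"
  by (simp add: nat_add_distrib)

(* Register arithmetic is evaluated on reals; folding it back into natural numbers lets the
   simplifier recognise the resulting addresses. *)
lemma real_of_nat_folds:
  "real a + numeral k = real (a + numeral k)" "numeral k + real a = real (numeral k + a)"
  "real a + 1 = real (a + 1)" "real a + real b = real (a + b)" "real a * real b = real (a * b)"
  "numeral k * real b = real (numeral k * b)" "real (Suc v) - 1 = real v"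
  by simp_all

bundle ram_arith = of_nat_add [simp del] of_nat_mult [simp del] of_nat_Suc [simp del]
  real_of_nat_folds [simp]

definition regs :: "inst \<Rightarrow> nat" where
  "regs I = 3 * dim I"

definition table_index :: "nat \<Rightarrow> nat \<Rightarrow> nat \<Rightarrow> nat \<Rightarrow> nat \<Rightarrow> nat" where
  "table_index N i j k l = ((i * N + j) * N + k) * N + l"

definition out_buf :: "inst \<Rightarrow> nat" where
  "out_buf I = regs I + 32 + dim I ^ 4"

(* The input cells 3 .. 3 dim - 1 are kept; the register file starts at
   regs I and cell 2 holds its address. Registers 0-4 hold n1, n2, p, dim and n1 + n2,
   registers 5-8 the current state (i, j, k, l) and register 23 the address of the output
   buffer. From register 32 on lies the table of opt_cost, indexed by table_index, and after
   it the output buffer. *)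
abbreviation reg_addr :: "int \<Rightarrow> expr" where
  "reg_addr r \<equiv> Add (Ld (Const 2)) (Const r)"

abbreviation reg :: "int \<Rightarrow> expr" where
  "reg r \<equiv> Ld (reg_addr r)"

abbreviation set_reg :: "int \<Rightarrow> expr \<Rightarrow> com" where
  "set_reg r e \<equiv> Store (reg_addr r) e"

definition table_addr :: "int \<Rightarrow> int \<Rightarrow> int \<Rightarrow> int \<Rightarrow> expr" where
  "table_addr a b c d = Add (reg_addr 32)
     (Add (Mul (Add (Mul (Add (Mul (reg a) (reg 3)) (reg b)) (reg 3)) (reg c)) (reg 3)) (reg d))"

lemma radix_less: "x < y \<Longrightarrow> b < N \<Longrightarrow> x * N + b < y * N + (b' :: nat)"
proof -
  assume "x < y" "b < N"
  then have "x * N + b < (x + 1) * N" by simp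
  also have "\<dots> \<le> y * N" using \<open>x < y\<close> by (intro mult_le_mono1) simp
  finally show ?thesis by simp
qed

lemma radix_inj: "b < N \<Longrightarrow> b' < N \<Longrightarrow> x * N + b = x' * N + (b' :: nat) \<Longrightarrow> x = x' \<and> b = b'"
  by (metis add.commute div_mult_self1 div_less mod_mult_self1 mod_less not_less0 plus_nat.add_0)

lemma table_index_less_fst:
  "j < N \<Longrightarrow> k < N \<Longrightarrow> l < N \<Longrightarrow> table_index N i j k l < table_index N (i + 1) j' k' l'"
  unfolding table_index_def by (intro radix_less) simp_all

lemma table_index_less_snd:
  assumes "k < N" "l < N"
  shows "table_index N i j k l < table_index N i (j + 1) k' l'"
proof -
  have "(i * N + j) * N + k < (i * N + (j + 1)) * N + k'" using assms(1) by (rule radix_less[rotated]) simp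
  then show ?thesis unfolding table_index_def using assms(2) by (rule radix_less)
qed

lemma table_index_inj:
  "j < N \<Longrightarrow> k < N \<Longrightarrow> l < N \<Longrightarrow> j' < N \<Longrightarrow> k' < N \<Longrightarrow> l' < N
     \<Longrightarrow> table_index N i j k l = table_index N i' j' k' l' \<Longrightarrow> i = i' \<and> j = j' \<and> k = k' \<and> l = l'"
  unfolding table_index_def by (metis radix_inj)

lemma table_index_less_power:
  assumes "i < N" "j < N" "k < N" "l < N"
  shows "table_index N i j k l < N ^ 4"
proof -
  have "table_index N i j k l < table_index N (i + 1) 0 0 0"
    using assms by (intro table_index_less_fst)
  also have "\<dots> = (i + 1) * N ^ 3" by (simp add: table_index_def power3_eq_cube algebra_simps)
  also have "\<dots> \<le> N * N ^ 3" using assms(1) by (intro mult_le_mono1) simp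
  also have "\<dots> = N ^ 4" by (simp add: power_Suc[symmetric])
  finally show ?thesis .
qed

lemma table_index_carry:
  "table_index N i j k N = table_index N i j (Suc k) 0"
  "table_index N i j N 0 = table_index N i (Suc j) 0 0"
  "table_index N i N 0 0 = table_index N (Suc i) 0 0 0"
  by (simp_all add: table_index_def algebra_simps)

definition layout_ok :: "inst \<Rightarrow> mem \<Rightarrow> bool" where
  "layout_ok I m \<longleftrightarrow> m 2 = real (regs I) \<and> m (regs I) = real (n1 I) \<and> m (regs I + 1) = real (n2 I)
     \<and> m (regs I + 2) = pt I \<and> m (regs I + 3) = real (dim I) \<and> m (regs I + 4) = real (n1 I + n2 I)
     \<and> m (regs I + 23) = real (out_buf I)
     \<and> (\<forall>a. 3 \<le> a \<longrightarrow> a < regs I \<longrightarrow> m a = input_mem I a)"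

definition table_ok :: "objective \<Rightarrow> inst \<Rightarrow> mem \<Rightarrow> nat \<Rightarrow> bool" where
  "table_ok ob I m lo \<longleftrightarrow> (\<forall>i j k l. i < dim I \<longrightarrow> j < dim I \<longrightarrow> k < dim I \<longrightarrow> l < dim I
     \<longrightarrow> lo \<le> table_index (dim I) i j k l
     \<longrightarrow> m (regs I + 32 + table_index (dim I) i j k l) = opt_cost ob I (i, j, k, l))"

lemma table_okD:
  "table_ok ob I m lo \<Longrightarrow> i < dim I \<Longrightarrow> j < dim I \<Longrightarrow> k < dim I \<Longrightarrow> l < dim I
     \<Longrightarrow> lo \<le> table_index (dim I) i j k l
     \<Longrightarrow> m (regs I + 32 + table_index (dim I) i j k l) = opt_cost ob I (i, j, k, l)"
  unfolding table_ok_def by simp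

definition agrees_outside :: "mem \<Rightarrow> mem \<Rightarrow> nat set \<Rightarrow> bool" where
  "agrees_outside m m' A \<longleftrightarrow> (\<forall>a. a \<notin> A \<longrightarrow> m' a = m a)"

lemma agrees_outside_trans:
  "agrees_outside m m1 A \<Longrightarrow> agrees_outside m1 m2 B \<Longrightarrow> A \<union> B \<subseteq> C \<Longrightarrow> agrees_outside m m2 C"
  unfolding agrees_outside_def by (metis UnCI subsetD)

lemma agrees_outside_upd: "a \<in> A \<Longrightarrow> agrees_outside m (m(a := v)) A"
  by (simp add: agrees_outside_def)

lemma layout_ok_agrees:
  assumes "layout_ok I m" "agrees_outside m m' A" "\<forall>a\<in>A. regs I + 5 \<le> a \<and> a \<noteq> regs I + 23"
  shows "layout_ok I m'"
proof -
  have "m' a = m a" if "a < regs I + 5 \<or> a = regs I + 23" for a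
  proof -
    have "a \<notin> A" using assms(3) that by auto
    then show ?thesis using assms(2) unfolding agrees_outside_def by simp
  qed
  moreover have "3 \<le> regs I" by (simp add: regs_def dim_def)
  ultimately show ?thesis using assms(1) unfolding layout_ok_def by simp
qed

lemma table_ok_agrees:
  assumes "table_ok ob I m lo" "agrees_outside m m' A"
    and "\<forall>a\<in>A. a < regs I + 32 \<or> out_buf I \<le> a"
  shows "table_ok ob I m' lo"
  unfolding table_ok_def
proof (intro allI impI)
  fix i j k l
  assume h: "i < dim I" "j < dim I" "k < dim I" "l < dim I" "lo \<le> table_index (dim I) i j k l"
  have "regs I + 32 + table_index (dim I) i j k l < out_buf I"
    using table_index_less_power[OF h(1-4)] by (simp add: out_buf_def)
  then have "regs I + 32 + table_index (dim I) i j k l \<notin> A" using assms(3) by fastforce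
  then show "m' (regs I + 32 + table_index (dim I) i j k l) = opt_cost ob I (i, j, k, l)"
    using assms(1,2) h unfolding agrees_outside_def table_ok_def by simp
qed

lemma table_ok_upd_reg: "table_ok ob I m lo \<Longrightarrow> r < 32 \<Longrightarrow> table_ok ob I (m(regs I + r := v)) lo"
  by (erule table_ok_agrees[where A = "{regs I + r}"]) (auto simp: agrees_outside_def)

lemma layout_ok_upd_reg: "layout_ok I m \<Longrightarrow> 5 \<le> r \<Longrightarrow> r \<noteq> 23 \<Longrightarrow> layout_ok I (m(regs I + r := v))"
  by (erule layout_ok_agrees[where A = "{regs I + r}"]) (auto simp: agrees_outside_def)

lemma table_ok_store:
  assumes "table_ok ob I m (table_index (dim I) i j k l + 1)"
    and "j < dim I" "k < dim I" "l < dim I"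
  shows "table_ok ob I (m(regs I + 32 + table_index (dim I) i j k l := opt_cost ob I (i, j, k, l)))
           (table_index (dim I) i j k l)"
  unfolding table_ok_def
proof (intro allI impI)
  fix i' j' k' l'
  assume h: "i' < dim I" "j' < dim I" "k' < dim I" "l' < dim I"
    "table_index (dim I) i j k l \<le> table_index (dim I) i' j' k' l'"
  show "(m(regs I + 32 + table_index (dim I) i j k l := opt_cost ob I (i, j, k, l)))
      (regs I + 32 + table_index (dim I) i' j' k' l') = opt_cost ob I (i', j', k', l')"
  proof (cases "table_index (dim I) i' j' k' l' = table_index (dim I) i j k l")
    case True
    then show ?thesis using table_index_inj[OF assms(2-4) h(2-4) True[symmetric]] by simp
  next
    case False
    then have "table_index (dim I) i j k l + 1 \<le> table_index (dim I) i' j' k' l'" using h(5) by simp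
    then have "m (regs I + 32 + table_index (dim I) i' j' k' l') = opt_cost ob I (i', j', k', l')"
      by (rule table_okD[OF assms(1) h(1-4)])
    moreover have "regs I + 32 + table_index (dim I) i' j' k' l' \<noteq> regs I + 32 + table_index (dim I) i j k l"
      using False by simp
    ultimately show ?thesis by simp
  qed
qed

lemma exec_within_if_run:
  "(\<exists>k m'. run_loop_free c m = Some (k, m') \<and> k \<le> K \<and> Q m') \<Longrightarrow> exec_within c m K Q"
  using exec_within_run by blast

lemma layout_ok_input:
  "layout_ok I m \<Longrightarrow> 3 \<le> a \<Longrightarrow> a < regs I \<Longrightarrow> m a = input_mem I a"
  by (simp add: layout_ok_def)

lemma job_index_bounds: "x \<in> jobs I \<Longrightarrow> 0 < job_index I x \<and> job_index I x < dim I"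
  by (cases x) (auto simp: jobs_def dim_def)

section \<open>The program\<close>

fun cost_prog :: "objective \<Rightarrow> com" where
  "cost_prog WeightedCompletion = set_reg 17 (Mul (Ld (Add (Mul (Const 3) (reg 14)) (Const 2))) (reg 20))"
| "cost_prog WeightedTardiness = If (Less (Ld (Add (Mul (Const 3) (reg 14)) (Const 1))) (reg 20))
     (set_reg 17 (Mul (Ld (Add (Mul (Const 3) (reg 14)) (Const 2)))
        (Sub (reg 20) (Ld (Add (Mul (Const 3) (reg 14)) (Const 1))))))
     (set_reg 17 (Const 0))"

definition append_prog :: "objective \<Rightarrow> com" where
  "append_prog ob = Seq (set_reg 26 (Ld (Mul (Const 3) (reg 14))))
    (Seq (If (Less (reg 9) (reg 26))
           (Seq (set_reg 18 (reg 14)) (Seq (set_reg 19 (Const 1)) (set_reg 20 (Add (reg 26) (reg 2)))))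
           (Seq (set_reg 18 (reg 7)) (Seq (set_reg 19 (Add (reg 8) (Const 1))) (set_reg 20 (Add (reg 9) (reg 2))))))
    (Seq (cost_prog ob) (set_reg 17 (Add (reg 17) (Ld (table_addr 15 16 18 19))))))"

context
  includes ram_arith
begin

lemma append_prog_spec:
  assumes L: "layout_ok I m" and x: "x \<in> jobs I" and a: "after I x (i, j, k, l) = (i', j', k', l')"
    and r: "m (regs I + 7) = real k" "m (regs I + 8) = real l" "m (regs I + 9) = slot_time I (k, l)"
      "m (regs I + 14) = real (job_index I x)" "m (regs I + 15) = real i'" "m (regs I + 16) = real j'"
    and b: "i' < dim I" "j' < dim I" "k < dim I" "l + 1 < dim I"
    and T: "table_ok ob I m lo" "lo \<le> table_index (dim I) i' j' k' l'"
  shows "exec_within (append_prog ob) m 20 (\<lambda>m'.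
    m' (regs I + 17) = append_cost ob I (opt_cost ob I) x (i, j, k, l)
    \<and> m' (regs I + 18) = real k' \<and> m' (regs I + 19) = real l'
    \<and> agrees_outside m m' {regs I + 17, regs I + 18, regs I + 19, regs I + 20, regs I + 26})"
proof -
  let ?kx = "job_index I x"
  have kx: "0 < ?kx" "?kx < dim I" using job_index_bounds[OF x] by auto
  have inp: "m (3 * ?kx) = rel I x" "m (3 * ?kx + 1) = due I x" "m (3 * ?kx + 2) = wt I x"
    using kx layout_ok_input[OF L] input_mem_job_index[OF x] by (simp_all add: regs_def)
  have lt: "3 * ?kx + 2 < regs I" using kx by (simp add: regs_def)
  have l0: "m 2 = real (regs I)" "m (regs I + 2) = pt I" "m (regs I + 3) = real (dim I)"
    using L by (simp_all add: layout_ok_def)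
  have nx: "slot_next I x (k, l) = (k', l')" "after I x (i, j, k, l) = (i', j', k', l')"
    using a by (cases x; simp)+
  have "k' < dim I" "l' < dim I" using nx kx b by (auto split: if_splits)
  then have tab: "m (regs I + 32 + table_index (dim I) i' j' k' l') = opt_cost ob I (i', j', k', l')"
    using T b by (intro table_okD) simp_all
  show ?thesis
  proof (cases "slot_time I (k, l) < rel I x")
    case True
    then have "k' = ?kx" "l' = 1" "slot_time I (k', l') = rel I x + pt I"
      using nx kx input_mem_job_index(1)[OF x] by auto
    then show ?thesis using True tab inp lt l0 r nx unfolding append_prog_def table_addr_def
      by (intro exec_within_if_run, cases ob) (auto simp: table_index_def agrees_outside_def split: bool.split)
  next
    case False
    then have "k' = k" "l' = l + 1" "slot_time I (k', l') = slot_time I (k, l) + pt I"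
      using nx by (auto simp: algebra_simps of_nat_Suc)
    then show ?thesis using False tab inp lt l0 r nx unfolding append_prog_def table_addr_def
      by (intro exec_within_if_run, cases ob) (auto simp: table_index_def agrees_outside_def split: bool.split)
  qed
qed

definition init_step :: com where
  "init_step = Seq
     (If (Eq (reg 7) (Const 0)) (set_reg 9 (Mul (reg 8) (reg 2)))
        (set_reg 9 (Add (Ld (Mul (Const 3) (reg 7))) (Mul (reg 8) (reg 2)))))
     (Seq (set_reg 10 (Const 0)) (Seq (set_reg 11 (Const 0)) (set_reg 24 (Const 0))))"

lemma init_step_run:
  assumes L: "layout_ok I m" and r: "m (regs I + 7) = real k" "m (regs I + 8) = real l" and k: "k < dim I"
  shows "run_loop_free init_step m
    = Some (5, m(regs I + 9 := slot_time I (k, l), regs I + 10 := 0, regs I + 11 := 0, regs I + 24 := 0))"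
proof -
  have l0: "m 2 = real (regs I)" "m (regs I + 2) = pt I" using L by (simp_all add: layout_ok_def)
  show ?thesis
  proof (cases "k = 0")
    case True
    then show ?thesis using r l0 unfolding init_step_def by simp
  next
    case False
    then have "m (3 * k) = input_mem I (3 * k)" using L k by (intro layout_ok_input) (simp_all add: regs_def)
    then show ?thesis using r l0 False unfolding init_step_def by simp
  qed
qed

definition scratch :: "inst \<Rightarrow> nat set" where
  "scratch I = {regs I + 10 ..< regs I + 21} \<union> {regs I + 24, regs I + 26}"

lemma exec_within_Seq_run:
  "run_loop_free c1 m = Some (k1, m1) \<Longrightarrow> exec_within c2 m1 K2 Q \<Longrightarrow> exec_within (Seq c1 c2) m (k1 + K2) Q"
  by (rule exec_within_Seq[OF exec_within_run[where Q = "\<lambda>m'. m' = m1"]]) auto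

definition try_J1 :: "objective \<Rightarrow> com" where
  "try_J1 ob = If (Less (reg 5) (reg 0))
     (Seq (Seq (set_reg 14 (Add (reg 5) (Const 1))) (Seq (set_reg 15 (Add (reg 5) (Const 1))) (set_reg 16 (reg 6))))
       (Seq (append_prog ob)
          (Seq (set_reg 10 (reg 17)) (Seq (set_reg 11 (Const 1))
            (Seq (set_reg 12 (reg 18)) (Seq (set_reg 13 (reg 19)) (set_reg 24 (Const 1))))))))
     Skip"

lemma try_J1_spec:
  assumes L: "layout_ok I m"
    and r: "m (regs I + 5) = real i" "m (regs I + 6) = real j" "m (regs I + 7) = real k"
      "m (regs I + 8) = real l" "m (regs I + 9) = slot_time I (k, l)"
      "m (regs I + 10) = 0" "m (regs I + 11) = 0" "m (regs I + 24) = 0"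
    and b: "i < dim I" "j < dim I" "k < dim I" "l + 1 < dim I"
    and T: "table_ok ob I m lo" "lo \<le> table_index (dim I) i j k l + 1"
  shows "exec_within (try_J1 ob) m 40 (\<lambda>m'. agrees_outside m m' (scratch I)
    \<and> m' (regs I + 10) = (if i < n1 I then append_cost ob I (opt_cost ob I) (J1 i) (i, j, k, l) else 0)
    \<and> m' (regs I + 11) = (if i < n1 I then 1 else 0)
    \<and> m' (regs I + 24) = (if i < n1 I then 1 else 0)
    \<and> (i < n1 I \<longrightarrow> m' (regs I + 12) = real (fst (slot_next I (J1 i) (k, l)))
                   \<and> m' (regs I + 13) = real (snd (slot_next I (J1 i) (k, l)))))"
proof -
  have l0: "m 2 = real (regs I)" "m (regs I) = real (n1 I)" using L by (simp_all add: layout_ok_def)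
  show ?thesis
  proof (cases "i < n1 I")
    case False
    then show ?thesis using l0 r unfolding try_J1_def
      by (intro exec_within_if_run) (simp add: agrees_outside_def)
  next
    case True
    obtain k' l' where nx: "slot_next I (J1 i) (k, l) = (k', l')" by fastforce
    define m2 where "m2 = m(regs I + 14 := real (i + 1), regs I + 15 := real (i + 1), regs I + 16 := real j)"
    have run2: "run_loop_free (Seq (set_reg 14 (Add (reg 5) (Const 1)))
        (Seq (set_reg 15 (Add (reg 5) (Const 1))) (set_reg 16 (reg 6)))) m = Some (3, m2)"
      using l0 r unfolding m2_def by simp
    have ag2: "agrees_outside m m2 {regs I + 14, regs I + 15, regs I + 16}"
      unfolding m2_def agrees_outside_def by simp
    have L2: "layout_ok I m2" by (rule layout_ok_agrees[OF L ag2]) auto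
    have T2: "table_ok ob I m2 lo" by (rule table_ok_agrees[OF T(1) ag2]) auto
    have "table_index (dim I) i j k l < table_index (dim I) (i + 1) j k' l'"
      using b by (intro table_index_less_fst) simp_all
    then have lo2: "lo \<le> table_index (dim I) (i + 1) j k' l'" using T(2) by linarith
    have ib: "i + 1 < dim I" using True by (simp add: dim_def)
    have jobs: "J1 i \<in> jobs I" using True by (simp add: jobs_def)
    have spec: "exec_within (append_prog ob) m2 20 (\<lambda>m3.
        m3 (regs I + 17) = append_cost ob I (opt_cost ob I) (J1 i) (i, j, k, l)
        \<and> m3 (regs I + 18) = real k' \<and> m3 (regs I + 19) = real l'
        \<and> agrees_outside m2 m3 {regs I + 17, regs I + 18, regs I + 19, regs I + 20, regs I + 26})"
      using append_prog_spec[OF L2 jobs _ _ _ _ _ _ _ ib b(2-4) T2 lo2, of i j] nx r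
      by (simp add: m2_def)
    have "exec_within (try_J1 ob) m (3 + (20 + 5) + 1) (\<lambda>m'. agrees_outside m m' (scratch I)
      \<and> m' (regs I + 10) = append_cost ob I (opt_cost ob I) (J1 i) (i, j, k, l)
      \<and> m' (regs I + 11) = 1 \<and> m' (regs I + 24) = 1
      \<and> m' (regs I + 12) = real k' \<and> m' (regs I + 13) = real l')"
      unfolding try_J1_def
    proof (intro exec_within_IfT exec_within_Seq_run[OF run2] exec_within_Seq[OF spec])
      show "beval (Less (reg 5) (reg 0)) m = Some True" using l0 r True by simp
      fix m3 assume m3: "m3 (regs I + 17) = append_cost ob I (opt_cost ob I) (J1 i) (i, j, k, l)
        \<and> m3 (regs I + 18) = real k' \<and> m3 (regs I + 19) = real l'
        \<and> agrees_outside m2 m3 {regs I + 17, regs I + 18, regs I + 19, regs I + 20, regs I + 26}"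
      then have "m3 2 = real (regs I)" using l0 unfolding agrees_outside_def m2_def by simp
      then show "exec_within (Seq (set_reg 10 (reg 17)) (Seq (set_reg 11 (Const 1))
            (Seq (set_reg 12 (reg 18)) (Seq (set_reg 13 (reg 19)) (set_reg 24 (Const 1)))))) m3 5
          (\<lambda>m'. agrees_outside m m' (scratch I)
            \<and> m' (regs I + 10) = append_cost ob I (opt_cost ob I) (J1 i) (i, j, k, l)
            \<and> m' (regs I + 11) = 1 \<and> m' (regs I + 24) = 1
            \<and> m' (regs I + 12) = real k' \<and> m' (regs I + 13) = real l')"
        using m3 ag2 by (intro exec_within_if_run) (auto simp: agrees_outside_def scratch_def)
    qed
    then show ?thesis by (rule exec_within_mono) (auto simp: True nx simp del: slot_next.simps)
  qed
qed

fun choice_code :: "job option \<Rightarrow> real" where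
  "choice_code None = 0"
| "choice_code (Some (J1 _)) = 1"
| "choice_code (Some (J2 _)) = 2"

definition try_J2 :: "objective \<Rightarrow> com" where
  "try_J2 ob = If (Less (reg 6) (reg 1))
     (Seq (Seq (set_reg 14 (Add (Add (reg 0) (reg 6)) (Const 1)))
             (Seq (set_reg 15 (reg 5)) (set_reg 16 (Add (reg 6) (Const 1)))))
       (Seq (append_prog ob)
          (If (And (Eq (reg 24) (Const 1)) (BNot (Less (reg 17) (reg 10)))) Skip
             (Seq (set_reg 10 (reg 17)) (Seq (set_reg 11 (Const 2))
                (Seq (set_reg 12 (reg 18)) (set_reg 13 (reg 19))))))))
     Skip"

lemma try_J2_spec:
  assumes L: "layout_ok I m"
    and r: "m (regs I + 5) = real i" "m (regs I + 6) = real j" "m (regs I + 7) = real k"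
      "m (regs I + 8) = real l" "m (regs I + 9) = slot_time I (k, l)"
      "m (regs I + 10) = (if i < n1 I then append_cost ob I (opt_cost ob I) (J1 i) (i, j, k, l) else 0)"
      "m (regs I + 11) = (if i < n1 I then 1 else 0)"
      "m (regs I + 24) = (if i < n1 I then 1 else 0)"
      "i < n1 I \<longrightarrow> m (regs I + 12) = real (fst (slot_next I (J1 i) (k, l)))
                   \<and> m (regs I + 13) = real (snd (slot_next I (J1 i) (k, l)))"
    and b: "i < dim I" "j < dim I" "k < dim I" "l + 1 < dim I"
    and T: "table_ok ob I m lo" "lo \<le> table_index (dim I) i j k l + 1"
  shows "exec_within (try_J2 ob) m 40 (\<lambda>m'. agrees_outside m m' (scratch I)
    \<and> m' (regs I + 10) = (case next_job ob I (i, j, k, l) of None \<Rightarrow> 0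
                            | Some x \<Rightarrow> append_cost ob I (opt_cost ob I) x (i, j, k, l))
    \<and> m' (regs I + 11) = choice_code (next_job ob I (i, j, k, l))
    \<and> (\<forall>x. next_job ob I (i, j, k, l) = Some x \<longrightarrow>
          m' (regs I + 12) = real (fst (slot_next I x (k, l)))
        \<and> m' (regs I + 13) = real (snd (slot_next I x (k, l)))))"
proof -
  let ?t1 = "append_cost ob I (opt_cost ob I) (J1 i) (i, j, k, l)"
  let ?t2 = "append_cost ob I (opt_cost ob I) (J2 j) (i, j, k, l)"
  have l0: "m 2 = real (regs I)" "m (regs I) = real (n1 I)" "m (regs I + 1) = real (n2 I)"
    using L by (simp_all add: layout_ok_def)
  show ?thesis
  proof (cases "j < n2 I")
    case False
    then show ?thesis using l0 r unfolding try_J2_def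
      by (intro exec_within_if_run) (auto simp: agrees_outside_def next_job_def)
  next
    case True
    obtain k' l' where nx: "slot_next I (J2 j) (k, l) = (k', l')" by fastforce
    define m2 where "m2 = m(regs I + 14 := real (n1 I + j + 1), regs I + 15 := real i, regs I + 16 := real (j + 1))"
    have run2: "run_loop_free (Seq (set_reg 14 (Add (Add (reg 0) (reg 6)) (Const 1)))
        (Seq (set_reg 15 (reg 5)) (set_reg 16 (Add (reg 6) (Const 1))))) m = Some (3, m2)"
      using l0 r unfolding m2_def by simp
    have ag2: "agrees_outside m m2 {regs I + 14, regs I + 15, regs I + 16}"
      unfolding m2_def agrees_outside_def by simp
    have L2: "layout_ok I m2" by (rule layout_ok_agrees[OF L ag2]) auto
    have T2: "table_ok ob I m2 lo" by (rule table_ok_agrees[OF T(1) ag2]) auto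
    have "table_index (dim I) i j k l < table_index (dim I) i (j + 1) k' l'"
      using b by (intro table_index_less_snd) simp_all
    then have lo2: "lo \<le> table_index (dim I) i (j + 1) k' l'" using T(2) by linarith
    have jb: "j + 1 < dim I" using True by (simp add: dim_def)
    have jobs: "J2 j \<in> jobs I" using True by (simp add: jobs_def)
    have spec: "exec_within (append_prog ob) m2 20 (\<lambda>m3.
        m3 (regs I + 17) = ?t2 \<and> m3 (regs I + 18) = real k' \<and> m3 (regs I + 19) = real l'
        \<and> agrees_outside m2 m3 {regs I + 17, regs I + 18, regs I + 19, regs I + 20, regs I + 26})"
      using append_prog_spec[OF L2 jobs _ _ _ _ _ _ _ b(1) jb b(3,4) T2 lo2, of i j] nx r
      by (simp add: m2_def add.commute)
    define Q where "Q m' \<longleftrightarrow> agrees_outside m m' (scratch I)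
      \<and> m' (regs I + 10) = (case next_job ob I (i, j, k, l) of None \<Rightarrow> 0
                              | Some x \<Rightarrow> append_cost ob I (opt_cost ob I) x (i, j, k, l))
      \<and> m' (regs I + 11) = choice_code (next_job ob I (i, j, k, l))
      \<and> (\<forall>x. next_job ob I (i, j, k, l) = Some x \<longrightarrow>
            m' (regs I + 12) = real (fst (slot_next I x (k, l)))
          \<and> m' (regs I + 13) = real (snd (slot_next I x (k, l))))" for m'
    have "exec_within (try_J2 ob) m (3 + (20 + 6) + 1) Q"
      unfolding try_J2_def
    proof (intro exec_within_IfT exec_within_Seq_run[OF run2] exec_within_Seq[OF spec])
      show "beval (Less (reg 6) (reg 1)) m = Some True" using l0 r True by simp
      fix m3 assume m3: "m3 (regs I + 17) = ?t2 \<and> m3 (regs I + 18) = real k' \<and> m3 (regs I + 19) = real l'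
        \<and> agrees_outside m2 m3 {regs I + 17, regs I + 18, regs I + 19, regs I + 20, regs I + 26}"
      then have m3r: "m3 2 = real (regs I)" "m3 (regs I + 10) = m (regs I + 10)"
        "m3 (regs I + 11) = m (regs I + 11)" "m3 (regs I + 24) = m (regs I + 24)"
        "m3 (regs I + 12) = m (regs I + 12)" "m3 (regs I + 13) = m (regs I + 13)"
        using l0 unfolding agrees_outside_def m2_def by simp_all
      have ag3: "agrees_outside m m3 (scratch I)"
        using m3 ag2 by (auto simp: agrees_outside_def scratch_def)
      show "exec_within (If (And (Eq (reg 24) (Const 1)) (BNot (Less (reg 17) (reg 10)))) Skip
             (Seq (set_reg 10 (reg 17)) (Seq (set_reg 11 (Const 2))
                (Seq (set_reg 12 (reg 18)) (set_reg 13 (reg 19)))))) m3 6 Q"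
      proof (cases "i < n1 I \<and> \<not> ?t2 < ?t1")
        case keep: True
        then have "next_job ob I (i, j, k, l) = Some (J1 i)" by (simp add: next_job_def)
        then show ?thesis using keep m3 m3r r ag3 unfolding Q_def
          by (intro exec_within_if_run) simp
      next
        case replace: False
        then have "next_job ob I (i, j, k, l) = Some (J2 j)" using True by (auto simp: next_job_def)
        then show ?thesis using replace m3 m3r r ag3 nx unfolding Q_def
          by (intro exec_within_if_run) (auto simp: agrees_outside_def scratch_def simp del: slot_next.simps)
      qed
    qed
    then show ?thesis unfolding Q_def by (rule exec_within_mono) auto
  qed
qed

definition dp_step :: "objective \<Rightarrow> com" where
  "dp_step ob = Seq init_step (Seq (try_J1 ob) (try_J2 ob))"

lemma scratch_bounds:
  "\<forall>a \<in> insert (regs I + 9) (scratch I). regs I + 5 \<le> a \<and> a \<noteq> regs I + 23 \<and> a < regs I + 32"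
  by (auto simp: scratch_def)

lemma dp_step_spec:
  assumes L: "layout_ok I m"
    and r: "m (regs I + 5) = real i" "m (regs I + 6) = real j" "m (regs I + 7) = real k" "m (regs I + 8) = real l"
    and b: "i < dim I" "j < dim I" "k < dim I" "l + 1 < dim I"
    and T: "table_ok ob I m lo" "lo \<le> table_index (dim I) i j k l + 1"
  shows "exec_within (dp_step ob) m 90 (\<lambda>m'. agrees_outside m m' (insert (regs I + 9) (scratch I))
    \<and> m' (regs I + 10) = opt_cost ob I (i, j, k, l)
    \<and> m' (regs I + 11) = choice_code (next_job ob I (i, j, k, l))
    \<and> (\<forall>x. next_job ob I (i, j, k, l) = Some x \<longrightarrow>
          m' (regs I + 12) = real (fst (slot_next I x (k, l)))
        \<and> m' (regs I + 13) = real (snd (slot_next I x (k, l)))))"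
proof -
  define m1 where "m1 = m(regs I + 9 := slot_time I (k, l), regs I + 10 := 0, regs I + 11 := 0, regs I + 24 := 0)"
  have run1: "run_loop_free init_step m = Some (5, m1)"
    unfolding m1_def using init_step_run[OF L r(3,4) b(3)] .
  have ag1: "agrees_outside m m1 (insert (regs I + 9) (scratch I))"
    unfolding m1_def agrees_outside_def scratch_def by simp
  have L1: "layout_ok I m1" using layout_ok_agrees[OF L ag1] scratch_bounds by blast
  have T1: "table_ok ob I m1 lo" using table_ok_agrees[OF T(1) ag1] scratch_bounds by blast
  have r1: "m1 (regs I + 5) = real i" "m1 (regs I + 6) = real j" "m1 (regs I + 7) = real k"
    "m1 (regs I + 8) = real l" "m1 (regs I + 9) = slot_time I (k, l)"
    "m1 (regs I + 10) = 0" "m1 (regs I + 11) = 0" "m1 (regs I + 24) = 0"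
    using r unfolding m1_def by simp_all
  have "exec_within (dp_step ob) m (5 + (40 + 40)) (\<lambda>m'. agrees_outside m m' (insert (regs I + 9) (scratch I))
    \<and> m' (regs I + 10) = (case next_job ob I (i, j, k, l) of None \<Rightarrow> 0
                            | Some x \<Rightarrow> append_cost ob I (opt_cost ob I) x (i, j, k, l))
    \<and> m' (regs I + 11) = choice_code (next_job ob I (i, j, k, l))
    \<and> (\<forall>x. next_job ob I (i, j, k, l) = Some x \<longrightarrow>
          m' (regs I + 12) = real (fst (slot_next I x (k, l)))
        \<and> m' (regs I + 13) = real (snd (slot_next I x (k, l)))))"
    unfolding dp_step_def
  proof (intro exec_within_Seq_run[OF run1] exec_within_Seq[OF try_J1_spec[OF L1 r1 b T1 T(2)]])
    fix m2 assume m2: "agrees_outside m1 m2 (scratch I)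
      \<and> m2 (regs I + 10) = (if i < n1 I then append_cost ob I (opt_cost ob I) (J1 i) (i, j, k, l) else 0)
      \<and> m2 (regs I + 11) = (if i < n1 I then 1 else 0)
      \<and> m2 (regs I + 24) = (if i < n1 I then 1 else 0)
      \<and> (i < n1 I \<longrightarrow> m2 (regs I + 12) = real (fst (slot_next I (J1 i) (k, l)))
                     \<and> m2 (regs I + 13) = real (snd (slot_next I (J1 i) (k, l))))"
    then have ag2: "agrees_outside m1 m2 (scratch I)" by simp
    have L2: "layout_ok I m2" using layout_ok_agrees[OF L1 ag2] scratch_bounds by blast
    have T2: "table_ok ob I m2 lo" using table_ok_agrees[OF T1 ag2] scratch_bounds by blast
    have r2: "m2 (regs I + 5) = real i" "m2 (regs I + 6) = real j" "m2 (regs I + 7) = real k"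
      "m2 (regs I + 8) = real l" "m2 (regs I + 9) = slot_time I (k, l)"
      using ag2 r1 unfolding agrees_outside_def scratch_def by simp_all
    show "exec_within (try_J2 ob) m2 40 (\<lambda>m'. agrees_outside m m' (insert (regs I + 9) (scratch I))
      \<and> m' (regs I + 10) = (case next_job ob I (i, j, k, l) of None \<Rightarrow> 0
                              | Some x \<Rightarrow> append_cost ob I (opt_cost ob I) x (i, j, k, l))
      \<and> m' (regs I + 11) = choice_code (next_job ob I (i, j, k, l))
      \<and> (\<forall>x. next_job ob I (i, j, k, l) = Some x \<longrightarrow>
            m' (regs I + 12) = real (fst (slot_next I x (k, l)))
          \<and> m' (regs I + 13) = real (snd (slot_next I x (k, l)))))"
      by (rule exec_within_mono[OF try_J2_spec[OF L2 r2 _ _ _ _ b T2 T(2)]])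
        (use m2 ag1 in \<open>auto intro: agrees_outside_trans\<close>)
  qed
  then show ?thesis by (rule exec_within_mono) (use b(4) in \<open>simp_all add: opt_cost_eq_next_job\<close>)
qed

definition fill_entry :: "objective \<Rightarrow> com" where
  "fill_entry ob = If (Less (Add (reg 8) (Const 1)) (reg 3))
     (Seq (dp_step ob) (Store (table_addr 5 6 7 8) (reg 10)))
     (Store (table_addr 5 6 7 8) (Const 0))"

definition filled :: "objective \<Rightarrow> inst \<Rightarrow> nat \<Rightarrow> mem \<Rightarrow> bool" where
  "filled ob I lo m \<longleftrightarrow> layout_ok I m \<and> table_ok ob I m lo"

lemma filled_upd_reg: "filled ob I lo m \<Longrightarrow> 5 \<le> r \<Longrightarrow> r < 23 \<Longrightarrow> filled ob I lo (m(regs I + r := v))"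
  by (simp add: filled_def layout_ok_upd_reg table_ok_upd_reg)

lemma fill_entry_spec:
  assumes F: "filled ob I (table_index (dim I) i j k l + 1) m"
    and r: "m (regs I + 5) = real i" "m (regs I + 6) = real j" "m (regs I + 7) = real k" "m (regs I + 8) = real l"
    and b: "i < dim I" "j < dim I" "k < dim I" "l < dim I"
  shows "exec_within (fill_entry ob) m 92 (\<lambda>m'. filled ob I (table_index (dim I) i j k l) m'
    \<and> m' (regs I + 5) = real i \<and> m' (regs I + 6) = real j \<and> m' (regs I + 7) = real k
    \<and> m' (regs I + 8) = real l)"
proof -
  have L: "layout_ok I m" and T: "table_ok ob I m (table_index (dim I) i j k l + 1)"
    using F by (simp_all add: filled_def)
  have l0: "m 2 = real (regs I)" "m (regs I + 3) = real (dim I)" using L by (simp_all add: layout_ok_def)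
  let ?a = "regs I + 32 + table_index (dim I) i j k l"
  have store: "filled ob I (table_index (dim I) i j k l) (m'(?a := opt_cost ob I (i, j, k, l)))"
    if "layout_ok I m'" "table_ok ob I m' (table_index (dim I) i j k l + 1)" for m'
  proof -
    have "layout_ok I (m'(?a := opt_cost ob I (i, j, k, l)))"
      by (rule layout_ok_agrees[OF that(1) agrees_outside_upd[of ?a "{?a}"]]) auto
    then show ?thesis using table_ok_store[OF that(2) b(2-4)] by (simp add: filled_def)
  qed
  show ?thesis
  proof (cases "l + 1 < dim I")
    case True
    have "exec_within (fill_entry ob) m (90 + 1 + 1) (\<lambda>m'. filled ob I (table_index (dim I) i j k l) m'
      \<and> m' (regs I + 5) = real i \<and> m' (regs I + 6) = real j \<and> m' (regs I + 7) = real k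
      \<and> m' (regs I + 8) = real l)"
      unfolding fill_entry_def
    proof (intro exec_within_IfT exec_within_Seq[OF dp_step_spec[OF L r b(1-3) True T le_refl]])
      show "beval (Less (Add (reg 8) (Const 1)) (reg 3)) m = Some True" using l0 r True by simp
      fix m' assume m': "agrees_outside m m' (insert (regs I + 9) (scratch I))
        \<and> m' (regs I + 10) = opt_cost ob I (i, j, k, l)
        \<and> m' (regs I + 11) = choice_code (next_job ob I (i, j, k, l))
        \<and> (\<forall>x. next_job ob I (i, j, k, l) = Some x \<longrightarrow>
              m' (regs I + 12) = real (fst (slot_next I x (k, l)))
            \<and> m' (regs I + 13) = real (snd (slot_next I x (k, l))))"
      then have L': "layout_ok I m'" and T': "table_ok ob I m' (table_index (dim I) i j k l + 1)"
        using layout_ok_agrees[OF L] table_ok_agrees[OF T] scratch_bounds by blast+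
      have r': "m' 2 = real (regs I)" "m' (regs I + 3) = real (dim I)" "m' (regs I + 5) = real i"
        "m' (regs I + 6) = real j" "m' (regs I + 7) = real k" "m' (regs I + 8) = real l"
        using m' l0 r unfolding agrees_outside_def scratch_def by simp_all
      show "exec_within (Store (table_addr 5 6 7 8) (reg 10)) m' 1 (\<lambda>m'. filled ob I (table_index (dim I) i j k l) m'
        \<and> m' (regs I + 5) = real i \<and> m' (regs I + 6) = real j \<and> m' (regs I + 7) = real k
        \<and> m' (regs I + 8) = real l)"
        using store[OF L' T'] r' m' unfolding table_addr_def
        by (intro exec_within_if_run) (simp add: table_index_def)
    qed
    then show ?thesis by simp
  next
    case False
    then have "opt_cost ob I (i, j, k, l) = 0" by (simp add: opt_cost.simps)
    then show ?thesis using store[OF L T] l0 r False unfolding fill_entry_def table_addr_def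
      by (intro exec_within_if_run) (simp add: table_index_def)
  qed
qed

definition loop_steps :: "nat \<Rightarrow> nat \<Rightarrow> nat" where
  "loop_steps N K = N * (K + 2) + 2"

definition count_down :: "int \<Rightarrow> com \<Rightarrow> com" where
  "count_down r c = Seq (set_reg r (reg 3))
     (While (Less (Const 0) (reg r)) (Seq (set_reg r (Sub (reg r) (Const 1))) c))"

lemma count_down_spec:
  assumes regs: "\<And>v m. Q v m \<Longrightarrow> m 2 = real (regs I) \<and> m (regs I + 3) = real (dim I)"
    and upd: "\<And>v m x. Q v m \<Longrightarrow> Q v (m(regs I + r := x))"
    and body: "\<And>v m. v < dim I \<Longrightarrow> Q (Suc v) m \<Longrightarrow> m (regs I + r) = real v
       \<Longrightarrow> exec_within c m K (\<lambda>m'. Q v m' \<and> m' (regs I + r) = real v)"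
    and start: "Q (dim I) m"
  shows "exec_within (count_down (int r) c) m (loop_steps (dim I) K) (Q 0)"
proof -
  define P where "P t m' \<longleftrightarrow> Q (dim I - t) m' \<and> m' (regs I + r) = real (dim I - t)" for t m'
  have guard: "beval (Less (Const 0) (reg (int r))) m' = Some (0 < m' (regs I + r))" if "Q v m'" for v m'
    using regs[OF that] by simp
  have run0: "run_loop_free (set_reg (int r) (reg 3)) m = Some (1, m(regs I + r := real (dim I)))"
    using regs[OF start] by simp
  have "loop_steps (dim I) K = 1 + (dim I * (1 + K + 1) + 1)" by (simp add: loop_steps_def)
  then show ?thesis unfolding count_down_def
  proof (simp only:, intro exec_within_Seq_run[OF run0] exec_within_mono[OF exec_within_While[where P = P]])
    fix t m1 assume t: "t < dim I" and p: "P t m1"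
    then have q1: "Q (Suc (dim I - Suc t)) m1" "m1 (regs I + r) = real (Suc (dim I - Suc t))"
      unfolding P_def by (simp_all add: Suc_diff_Suc)
    have r1: "m1 2 = real (regs I)" using regs[OF q1(1)] by simp
    have dec: "run_loop_free (set_reg (int r) (Sub (reg (int r)) (Const 1))) m1
        = Some (1, m1(regs I + r := real (dim I - Suc t)))"
      using r1 q1(2) by simp
    have "exec_within c (m1(regs I + r := real (dim I - Suc t))) K (P (Suc t))"
      using body[OF _ upd[OF q1(1)]] t unfolding P_def by simp
    then show "beval (Less (Const 0) (reg (int r))) m1 = Some True
        \<and> exec_within (Seq (set_reg (int r) (Sub (reg (int r)) (Const 1))) c) m1 (1 + K) (P (Suc t))"
      using guard[OF q1(1)] q1(2) exec_within_Seq_run[OF dec] by simp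
  next
    fix m1 assume "P (dim I) m1"
    then have "Q 0 m1" "m1 (regs I + r) = 0" by (simp_all add: P_def)
    then show "beval (Less (Const 0) (reg (int r))) m1 = Some False"
      using guard[of 0 m1] by simp
  qed (use upd[OF start] in \<open>auto simp: P_def\<close>)
qed

lemma filled_regs: "filled ob I lo m \<Longrightarrow> m 2 = real (regs I) \<and> m (regs I + 3) = real (dim I)"
  by (simp add: filled_def layout_ok_def)

lemma fill_l_spec:
  assumes b: "i < dim I" "j < dim I" "k < dim I"
    and F: "filled ob I (table_index (dim I) i j k (dim I)) m"
    and r: "m (regs I + 5) = real i" "m (regs I + 6) = real j" "m (regs I + 7) = real k"
  shows "exec_within (count_down 8 (fill_entry ob)) m (loop_steps (dim I) 92) (\<lambda>m'.
    filled ob I (table_index (dim I) i j k 0) m'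
    \<and> m' (regs I + 5) = real i \<and> m' (regs I + 6) = real j \<and> m' (regs I + 7) = real k)"
proof -
  let ?Q = "\<lambda>v m'. filled ob I (table_index (dim I) i j k v) m'
    \<and> m' (regs I + 5) = real i \<and> m' (regs I + 6) = real j \<and> m' (regs I + 7) = real k"
  have "exec_within (count_down (int 8) (fill_entry ob)) m (loop_steps (dim I) 92) (?Q 0)"
  proof (rule count_down_spec[where Q = ?Q])
    show "m' 2 = real (regs I) \<and> m' (regs I + 3) = real (dim I)" if "?Q v m'" for v m'
      using that filled_regs by blast
    show "?Q v (m'(regs I + 8 := x))" if "?Q v m'" for v m' x
      using that by (simp add: filled_upd_reg)
    show "exec_within (fill_entry ob) m' 92 (\<lambda>m''. ?Q v m'' \<and> m'' (regs I + 8) = real v)"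
      if "v < dim I" "?Q (Suc v) m'" "m' (regs I + 8) = real v" for v m'
      using fill_entry_spec[of ob I i j k v m'] that b by (simp add: table_index_def)
  qed (use F r in simp)
  then show ?thesis by simp
qed

lemma fill_k_spec:
  assumes b: "i < dim I" "j < dim I"
    and F: "filled ob I (table_index (dim I) i j (dim I) 0) m"
    and r: "m (regs I + 5) = real i" "m (regs I + 6) = real j"
  shows "exec_within (count_down 7 (count_down 8 (fill_entry ob))) m (loop_steps (dim I) (loop_steps (dim I) 92)) (\<lambda>m'.
    filled ob I (table_index (dim I) i j 0 0) m' \<and> m' (regs I + 5) = real i \<and> m' (regs I + 6) = real j)"
proof -
  let ?Q = "\<lambda>v m'. filled ob I (table_index (dim I) i j v 0) m'
    \<and> m' (regs I + 5) = real i \<and> m' (regs I + 6) = real j"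
  have "exec_within (count_down (int 7) (count_down 8 (fill_entry ob))) m
    (loop_steps (dim I) (loop_steps (dim I) 92)) (?Q 0)"
  proof (rule count_down_spec[where Q = ?Q])
    show "m' 2 = real (regs I) \<and> m' (regs I + 3) = real (dim I)" if "?Q v m'" for v m'
      using that filled_regs by blast
    show "?Q v (m'(regs I + 7 := x))" if "?Q v m'" for v m' x
      using that by (simp add: filled_upd_reg)
    show "exec_within (count_down 8 (fill_entry ob)) m' (loop_steps (dim I) 92)
        (\<lambda>m''. ?Q v m'' \<and> m'' (regs I + 7) = real v)"
      if "v < dim I" "?Q (Suc v) m'" "m' (regs I + 7) = real v" for v m'
      by (rule exec_within_mono[OF fill_l_spec[OF b that(1)]])
        (use that in \<open>simp_all add: table_index_carry\<close>)
  qed (use F r in simp)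
  then show ?thesis by simp
qed

lemma fill_j_spec:
  assumes b: "i < dim I"
    and F: "filled ob I (table_index (dim I) i (dim I) 0 0) m"
    and r: "m (regs I + 5) = real i"
  shows "exec_within (count_down 6 (count_down 7 (count_down 8 (fill_entry ob)))) m (loop_steps (dim I) (loop_steps (dim I) (loop_steps (dim I) 92)))
    (\<lambda>m'. filled ob I (table_index (dim I) i 0 0 0) m' \<and> m' (regs I + 5) = real i)"
proof -
  let ?Q = "\<lambda>v m'. filled ob I (table_index (dim I) i v 0 0) m' \<and> m' (regs I + 5) = real i"
  have "exec_within (count_down (int 6) (count_down 7 (count_down 8 (fill_entry ob)))) m
    (loop_steps (dim I) (loop_steps (dim I) (loop_steps (dim I) 92))) (?Q 0)"
  proof (rule count_down_spec[where Q = ?Q])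
    show "m' 2 = real (regs I) \<and> m' (regs I + 3) = real (dim I)" if "?Q v m'" for v m'
      using that filled_regs by blast
    show "?Q v (m'(regs I + 6 := x))" if "?Q v m'" for v m' x
      using that by (simp add: filled_upd_reg)
    show "exec_within (count_down 7 (count_down 8 (fill_entry ob))) m' (loop_steps (dim I) (loop_steps (dim I) 92))
        (\<lambda>m''. ?Q v m'' \<and> m'' (regs I + 6) = real v)"
      if "v < dim I" "?Q (Suc v) m'" "m' (regs I + 6) = real v" for v m'
      by (rule exec_within_mono[OF fill_k_spec[OF b that(1)]])
        (use that in \<open>simp_all add: table_index_carry\<close>)
  qed (use F r in simp)
  then show ?thesis by simp
qed

definition fill_table :: "objective \<Rightarrow> com" where
  "fill_table ob = count_down 5 (count_down 6 (count_down 7 (count_down 8 (fill_entry ob))))"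

lemma fill_table_spec:
  assumes F: "filled ob I (table_index (dim I) (dim I) 0 0 0) m"
  shows "exec_within (fill_table ob) m (loop_steps (dim I) (loop_steps (dim I) (loop_steps (dim I) (loop_steps (dim I) 92)))) (filled ob I 0)"
proof -
  let ?Q = "\<lambda>v. filled ob I (table_index (dim I) v 0 0 0)"
  have "exec_within (count_down (int 5) (count_down 6 (count_down 7 (count_down 8 (fill_entry ob))))) m
    (loop_steps (dim I) (loop_steps (dim I) (loop_steps (dim I) (loop_steps (dim I) 92)))) (?Q 0)"
  proof (rule count_down_spec[where Q = ?Q])
    show "m' 2 = real (regs I) \<and> m' (regs I + 3) = real (dim I)" if "?Q v m'" for v m'
      using that filled_regs by blast
    show "?Q v (m'(regs I + 5 := x))" if "?Q v m'" for v m' x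
      using that by (simp add: filled_upd_reg)
    show "exec_within (count_down 6 (count_down 7 (count_down 8 (fill_entry ob)))) m' (loop_steps (dim I) (loop_steps (dim I) (loop_steps (dim I) 92)))
        (\<lambda>m''. ?Q v m'' \<and> m'' (regs I + 5) = real v)"
      if "v < dim I" "?Q (Suc v) m'" "m' (regs I + 5) = real v" for v m'
      by (rule fill_j_spec[OF that(1)]) (use that in \<open>simp_all add: table_index_carry\<close>)
  qed (rule F)
  then show ?thesis unfolding fill_table_def by (simp add: table_index_def)
qed

definition regs_expr :: expr where
  "regs_expr = Add (Const 3) (Mul (Const 3) (Add (Ld (Const 0)) (Ld (Const 1))))"

definition init_memory :: com where
  "init_memory = Seq (Store (Add regs_expr (Const 0)) (Ld (Const 0)))
    (Seq (Store (Add regs_expr (Const 1)) (Ld (Const 1)))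
    (Seq (Store (Add regs_expr (Const 2)) (Ld (Const 2)))
    (Seq (Store (Add regs_expr (Const 3)) (Add (Add (Ld (Const 0)) (Ld (Const 1))) (Const 1)))
    (Seq (Store (Add regs_expr (Const 4)) (Add (Ld (Const 0)) (Ld (Const 1))))
    (Seq (Store (Const 2) regs_expr)
      (set_reg 23 (Add (reg_addr 32) (Mul (Mul (Mul (reg 3) (reg 3)) (reg 3)) (reg 3)))))))))"

lemma init_memory_spec: "exec_within init_memory (input_mem I) 7 (filled ob I (table_index (dim I) (dim I) 0 0 0))"
proof (rule exec_within_run)
  define M where "M = (input_mem I)(regs I := real (n1 I), regs I + 1 := real (n2 I), regs I + 2 := pt I,
     regs I + 3 := real (dim I), regs I + 4 := real (n1 I + n2 I), 2 := real (regs I),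
     regs I + 23 := real (out_buf I))"
  have inp: "input_mem I 0 = real (n1 I)" "input_mem I 1 = real (n2 I)" "input_mem I 2 = pt I"
    by (simp_all add: input_mem_def)
  have b: "regs I = 3 + 3 * (n1 I + n2 I)" "dim I = n1 I + n2 I + 1" "3 \<le> regs I"
    by (simp_all add: regs_def dim_def)
  show "run_loop_free init_memory (input_mem I) = Some (7, M)"
    unfolding init_memory_def regs_expr_def M_def out_buf_def using inp
    by (simp add: b power4_eq_xxxx)
  have "layout_ok I M" unfolding layout_ok_def M_def using b by (auto simp: inp)
  moreover have "table_ok ob I M (table_index (dim I) (dim I) 0 0 0)"
  proof -
    have "table_index (dim I) (dim I) 0 0 0 = dim I ^ 4" by (simp add: table_index_def power4_eq_xxxx)
    then show ?thesis using table_index_less_power[of _ "dim I"] unfolding table_ok_def by (metis leD)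
  qed
  ultimately show "filled ob I (table_index (dim I) (dim I) 0 0 0) M" by (simp add: filled_def)
qed simp

abbreviation opt_path :: "objective \<Rightarrow> inst \<Rightarrow> nat \<Rightarrow> state" where
  "opt_path ob I t \<equiv> (opt_step ob I ^^ t) (0, 0, 0, 0)"

definition emit_job :: com where
  "emit_job = If (Eq (reg 11) (Const 1))
     (Seq (Store (Add (reg 23) (reg 21)) (Add (reg 5) (Const 1))) (set_reg 5 (Add (reg 5) (Const 1))))
     (Seq (Store (Add (reg 23) (reg 21)) (Sub (Const 0) (Add (reg 6) (Const 1))))
        (set_reg 6 (Add (reg 6) (Const 1))))"

definition trace_step :: "objective \<Rightarrow> com" where
  "trace_step ob = Seq (dp_step ob)
     (Seq emit_job (Seq (set_reg 7 (reg 12)) (Seq (set_reg 8 (reg 13)) (set_reg 21 (Add (reg 21) (Const 1))))))"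

definition trace_inv :: "objective \<Rightarrow> inst \<Rightarrow> nat \<Rightarrow> mem \<Rightarrow> bool" where
  "trace_inv ob I t m \<longleftrightarrow> filled ob I 0 m \<and> m (regs I + 21) = real t
     \<and> (case opt_path ob I t of (i, j, k, l) \<Rightarrow>
          m (regs I + 5) = real i \<and> m (regs I + 6) = real j \<and> m (regs I + 7) = real k \<and> m (regs I + 8) = real l)
     \<and> (\<forall>q < t. m (out_buf I + q) = enc_job (the (next_job ob I (opt_path ob I q))))"

lemma trace_step_spec:
  assumes t: "t < n1 I + n2 I" and inv: "trace_inv ob I t m"
  shows "exec_within (trace_step ob) m (90 + 6) (trace_inv ob I (Suc t))"
proof -
  obtain i j k l where p: "opt_path ob I t = (i, j, k, l)" by (cases "opt_path ob I t")
  have c: "consistent_state I (i, j, k, l)" "i + j = t" using opt_step_path[of t I ob] t p by simp_all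
  then have "i < n1 I \<or> j < n2 I" using t by (auto simp: consistent_state_def)
  then obtain x where x: "next_job ob I (i, j, k, l) = Some x"
    by (cases "next_job ob I (i, j, k, l)") (auto simp: next_job_None)
  have avail: "available I (i, j, k, l) x" using x by (rule next_job_Some)
  obtain k' l' where nx: "slot_next I x (k, l) = (k', l')" by fastforce
  define i' j' where "i' = (case x of J1 _ \<Rightarrow> i + 1 | J2 _ \<Rightarrow> i)" and "j' = (case x of J1 _ \<Rightarrow> j | J2 _ \<Rightarrow> j + 1)"
  have after: "opt_path ob I (Suc t) = (i', j', k', l')"
  proof -
    have "opt_path ob I (Suc t) = after I x (i, j, k, l)"
      by (simp only: funpow.simps(2) comp_apply p) (simp add: opt_step_def x)
    then show ?thesis using avail nx by (cases x) (auto simp: i'_def j'_def)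
  qed
  have F: "filled ob I 0 m" and r: "m (regs I + 21) = real t" "m (regs I + 5) = real i"
    "m (regs I + 6) = real j" "m (regs I + 7) = real k" "m (regs I + 8) = real l"
    and buf: "\<forall>q < t. m (out_buf I + q) = enc_job (the (next_job ob I (opt_path ob I q)))"
    using inv p unfolding trace_inv_def by simp_all
  have L: "layout_ok I m" and T: "table_ok ob I m 0" using F by (simp_all add: filled_def)
  have b: "i < dim I" "j < dim I" "k < dim I" "l + 1 < dim I"
    using c t by (auto simp: consistent_state_def dim_def)
  show ?thesis unfolding trace_step_def
  proof (rule exec_within_Seq[OF dp_step_spec[OF L r(2-5) b T le0]])
    fix m1 assume m1: "agrees_outside m m1 (insert (regs I + 9) (scratch I))
      \<and> m1 (regs I + 10) = opt_cost ob I (i, j, k, l)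
      \<and> m1 (regs I + 11) = choice_code (next_job ob I (i, j, k, l))
      \<and> (\<forall>x. next_job ob I (i, j, k, l) = Some x \<longrightarrow>
            m1 (regs I + 12) = real (fst (slot_next I x (k, l)))
          \<and> m1 (regs I + 13) = real (snd (slot_next I x (k, l))))"
    have ag1: "agrees_outside m m1 (insert (regs I + 9) (scratch I))" using m1 by simp
    have F1: "filled ob I 0 m1"
      using layout_ok_agrees[OF L ag1] table_ok_agrees[OF T ag1] scratch_bounds by (simp add: filled_def)
    have r1: "m1 2 = real (regs I)" "m1 (regs I + 23) = real (out_buf I)" "m1 (regs I + 21) = real t"
      "m1 (regs I + 5) = real i" "m1 (regs I + 6) = real j"
      "m1 (regs I + 11) = choice_code (Some x)"
      "m1 (regs I + 12) = real k'" "m1 (regs I + 13) = real l'"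
      using F1 m1 x nx r unfolding filled_def layout_ok_def agrees_outside_def scratch_def by simp_all
    have buf1: "\<forall>q < t. m1 (out_buf I + q) = enc_job (the (next_job ob I (opt_path ob I q)))"
      using buf ag1 unfolding agrees_outside_def scratch_def out_buf_def by simp
    define m2 where "m2 = m1(out_buf I + t := enc_job x, regs I + 5 := real i', regs I + 6 := real j',
      regs I + 7 := real k', regs I + 8 := real l', regs I + 21 := real (Suc t))"
    have run2: "run_loop_free (Seq emit_job (Seq (set_reg 7 (reg 12)) (Seq (set_reg 8 (reg 13))
        (set_reg 21 (Add (reg 21) (Const 1)))))) m1 = Some (6, m2)"
      using avail r1 unfolding emit_job_def m2_def i'_def j'_def out_buf_def
      by (cases x) (auto intro!: ext)
    have ag2: "agrees_outside m1 m2 {out_buf I + t, regs I + 5, regs I + 6, regs I + 7, regs I + 8, regs I + 21}"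
      unfolding m2_def agrees_outside_def by simp
    have "filled ob I 0 m2" using F1 layout_ok_agrees[OF _ ag2] table_ok_agrees[OF _ ag2]
      unfolding filled_def by (simp add: out_buf_def)
    moreover have "\<forall>q < Suc t. m2 (out_buf I + q) = enc_job (the (next_job ob I (opt_path ob I q)))"
      using buf1 p x unfolding m2_def by (auto simp: out_buf_def less_Suc_eq)
    ultimately have "trace_inv ob I (Suc t) m2"
      unfolding trace_inv_def after m2_def by (simp add: out_buf_def)
    then show "exec_within (Seq emit_job (Seq (set_reg 7 (reg 12)) (Seq (set_reg 8 (reg 13))
        (set_reg 21 (Add (reg 21) (Const 1)))))) m1 6 (trace_inv ob I (Suc t))"
      by (rule exec_within_run[OF run2 le_refl])
  qed
qed

definition trace :: "objective \<Rightarrow> com" where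
  "trace ob = Seq
     (Seq (set_reg 5 (Const 0)) (Seq (set_reg 6 (Const 0)) (Seq (set_reg 7 (Const 0))
        (Seq (set_reg 8 (Const 0)) (set_reg 21 (Const 0))))))
     (While (Less (reg 21) (reg 4)) (trace_step ob))"

lemma trace_spec:
  assumes F: "filled ob I 0 m"
  shows "exec_within (trace ob) m (5 + ((n1 I + n2 I) * (96 + 1) + 1)) (trace_inv ob I (n1 I + n2 I))"
proof -
  define m0 where "m0 = m(regs I + 5 := 0, regs I + 6 := 0, regs I + 7 := 0, regs I + 8 := 0, regs I + 21 := 0)"
  have l0: "m 2 = real (regs I)" using F by (simp add: filled_def layout_ok_def)
  have run0: "run_loop_free (Seq (set_reg 5 (Const 0)) (Seq (set_reg 6 (Const 0)) (Seq (set_reg 7 (Const 0))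
      (Seq (set_reg 8 (Const 0)) (set_reg 21 (Const 0)))))) m = Some (5, m0)"
    using l0 unfolding m0_def by simp
  have "filled ob I 0 m0" unfolding m0_def using F by (simp add: filled_upd_reg)
  then have inv0: "trace_inv ob I 0 m0" unfolding trace_inv_def by (simp add: m0_def)
  have guard: "beval (Less (reg 21) (reg 4)) m' = Some (t < n1 I + n2 I)" if "trace_inv ob I t m'" for t m'
    using that by (simp add: trace_inv_def filled_def layout_ok_def)
  show ?thesis unfolding trace_def
  proof (intro exec_within_Seq_run[OF run0] exec_within_While[where P = "trace_inv ob I"])
    show "beval (Less (reg 21) (reg 4)) m' = Some True \<and> exec_within (trace_step ob) m' (96) (trace_inv ob I (Suc t))"
      if "t < n1 I + n2 I" "trace_inv ob I t m'" for t m'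
      using guard[OF that(2)] trace_step_spec[OF that] that(1) by simp
  qed (use guard inv0 in simp_all)
qed

(* Cells 0-2 are written last: cell 2 holds the address of the register file. *)
definition copy_out :: com where
  "copy_out = Seq
     (Seq (set_reg 25 (Const 3)) (While (Less (reg 25) (reg 4))
        (Seq (Store (reg 25) (Ld (Add (reg 23) (reg 25)))) (set_reg 25 (Add (reg 25) (Const 1))))))
     (Seq (Store (Const 0) (Ld (reg 23))) (Seq (Store (Const 1) (Ld (Add (reg 23) (Const 1))))
        (Store (Const 2) (Ld (Add (reg 23) (Const 2))))))"

definition copy_inv :: "inst \<Rightarrow> (nat \<Rightarrow> real) \<Rightarrow> nat \<Rightarrow> mem \<Rightarrow> bool" where
  "copy_inv I out t m \<longleftrightarrow> m 2 = real (regs I) \<and> m (regs I + 4) = real (n1 I + n2 I)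
     \<and> m (regs I + 23) = real (out_buf I) \<and> m (regs I + 25) = real (3 + t)
     \<and> (\<forall>q < n1 I + n2 I. m (out_buf I + q) = out q) \<and> (\<forall>q. 3 \<le> q \<longrightarrow> q < 3 + t \<longrightarrow> m q = out q)"

lemma copy_out_spec:
  assumes r: "m 2 = real (regs I)" "m (regs I + 4) = real (n1 I + n2 I)" "m (regs I + 23) = real (out_buf I)"
    and out: "\<forall>q < n1 I + n2 I. m (out_buf I + q) = out q"
  shows "exec_within copy_out m (1 + ((n1 I + n2 I - 3) * (2 + 1) + 1) + 3)
    (\<lambda>m'. \<forall>q < n1 I + n2 I. m' q = out q)"
proof -
  let ?n = "n1 I + n2 I"
  have nR: "?n < regs I" and R: "regs I + 26 < out_buf I" by (simp_all add: regs_def dim_def out_buf_def)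
  have run0: "run_loop_free (set_reg 25 (Const 3)) m = Some (1, m(regs I + 25 := real (3 + 0)))"
    using r by simp
  have inv0: "copy_inv I out 0 (m(regs I + 25 := real (3 + 0)))"
    unfolding copy_inv_def using r out R by simp
  have guard: "beval (Less (reg 25) (reg 4)) m' = Some (3 + t < ?n)" if "copy_inv I out t m'" for t m'
    using that by (simp add: copy_inv_def)
  have loop: "beval (Less (reg 25) (reg 4)) m1 = Some True
    \<and> exec_within (Seq (Store (reg 25) (Ld (Add (reg 23) (reg 25)))) (set_reg 25 (Add (reg 25) (Const 1))))
        m1 2 (copy_inv I out (Suc t))"
    if t: "t < ?n - 3" and inv: "copy_inv I out t m1" for t m1
  proof -
    have tn: "3 + t < ?n" using t by simp
    have rr: "m1 2 = real (regs I)" "m1 (regs I + 23) = real (out_buf I)" "m1 (regs I + 25) = real (3 + t)"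
      using inv by (simp_all add: copy_inv_def)
    define m2 where "m2 = m1(3 + t := m1 (out_buf I + (3 + t)), regs I + 25 := real (3 + Suc t))"
    have "run_loop_free (Seq (Store (reg 25) (Ld (Add (reg 23) (reg 25)))) (set_reg 25 (Add (reg 25) (Const 1)))) m1
        = Some (2, m2)"
      using rr tn nR unfolding m2_def by simp
    moreover have "copy_inv I out (Suc t) m2"
      using inv tn nR R unfolding copy_inv_def m2_def by (auto simp: less_Suc_eq)
    ultimately show ?thesis using guard[OF inv] tn by (simp add: exec_within_run)
  qed
  have "exec_within (Seq (set_reg 25 (Const 3)) (While (Less (reg 25) (reg 4))
      (Seq (Store (reg 25) (Ld (Add (reg 23) (reg 25)))) (set_reg 25 (Add (reg 25) (Const 1))))))
      m (1 + ((?n - 3) * (2 + 1) + 1)) (copy_inv I out (?n - 3))"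
    by (intro exec_within_Seq_run[OF run0] exec_within_While[where P = "copy_inv I out"] loop inv0)
      (use guard in simp_all)
  then show ?thesis unfolding copy_out_def
  proof (rule exec_within_Seq)
    fix m1 assume inv: "copy_inv I out (?n - 3) m1"
    then have rr: "m1 2 = real (regs I)" "m1 (regs I + 23) = real (out_buf I)"
      and bf: "\<forall>q < ?n. m1 (out_buf I + q) = out q" "\<forall>q. 3 \<le> q \<longrightarrow> q < 3 + (?n - 3) \<longrightarrow> m1 q = out q"
      by (simp_all add: copy_inv_def)
    show "exec_within (Seq (Store (Const 0) (Ld (reg 23))) (Seq (Store (Const 1) (Ld (Add (reg 23) (Const 1))))
        (Store (Const 2) (Ld (Add (reg 23) (Const 2)))))) m1 3 (\<lambda>m'. \<forall>q < ?n. m' q = out q)"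
    proof (rule exec_within_if_run)
      have "\<forall>q < ?n. (m1(0 := m1 (out_buf I), 1 := m1 (out_buf I + 1), 2 := m1 (out_buf I + 2))) q = out q"
      proof (intro allI impI)
        fix q assume q: "q < ?n"
        show "(m1(0 := m1 (out_buf I), 1 := m1 (out_buf I + 1), 2 := m1 (out_buf I + 2))) q = out q"
        proof (cases "q < 3")
          case True
          then have "q = 0 \<or> q = 1 \<or> q = 2" by auto
          then show ?thesis using bf(1) q by auto
        next
          case False
          then show ?thesis using bf(2) q by auto
        qed
      qed
      then show "\<exists>k m'. run_loop_free (Seq (Store (Const 0) (Ld (reg 23))) (Seq (Store (Const 1) (Ld (Add (reg 23) (Const 1))))
          (Store (Const 2) (Ld (Add (reg 23) (Const 2)))))) m1 = Some (k, m') \<and> k \<le> 3 \<and> (\<forall>q < ?n. m' q = out q)"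
        using rr by simp
    qed
  qed
qed

definition dp_program :: "objective \<Rightarrow> com" where
  "dp_program ob = Seq init_memory (Seq (fill_table ob) (Seq (trace ob) copy_out))"

lemma dp_program_steps:
  fixes n :: nat
  defines "N \<equiv> n + 1"
  shows "7 + (loop_steps N (loop_steps N (loop_steps N (loop_steps N 92))) + ((5 + (n * (96 + 1) + 1)) + (1 + ((n - 3) * (2 + 1) + 1) + 3)))
    \<le> 300 * N ^ 5"
proof -
  have "1 \<le> N" by (simp add: N_def)
  then have p: "N \<le> N ^ 5" "N ^ 2 \<le> N ^ 5" "N ^ 3 \<le> N ^ 5" "N ^ 4 \<le> N ^ 5" "1 \<le> N ^ 5"
    by (simp_all add: power_increasing[of _ 5 N, simplified] power_increasing[of 1 5 N, simplified])
  have "loop_steps N (loop_steps N (loop_steps N (loop_steps N 92))) = 94 * N ^ 4 + 4 * N ^ 3 + 4 * N ^ 2 + 4 * N + 2"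
    by (simp add: loop_steps_def algebra_simps power2_eq_square power3_eq_cube power4_eq_xxxx)
  moreover have "n * (96 + 1) \<le> 97 * N" "(n - 3) * (2 + 1) \<le> 3 * N" by (simp_all add: N_def)
  ultimately show ?thesis using p by linarith
qed

lemma dp_program_spec:
  "exec_within (dp_program ob) (input_mem I) (300 * dim I ^ 5)
     (\<lambda>m'. \<exists>\<pi>. optimal_seq ob I \<pi> \<and> (\<forall>q < n1 I + n2 I. m' q = enc_job (\<pi> ! q)))"
proof -
  let ?\<pi> = "opt_seq ob I (0, 0, 0, 0)"
  let ?K = "7 + (loop_steps (dim I) (loop_steps (dim I) (loop_steps (dim I) (loop_steps (dim I) 92)))
    + ((5 + ((n1 I + n2 I) * (96 + 1) + 1)) + (1 + ((n1 I + n2 I - 3) * (2 + 1) + 1) + 3)))"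
  have "exec_within (dp_program ob) (input_mem I) ?K
    (\<lambda>m'. \<forall>q < n1 I + n2 I. m' q = enc_job (?\<pi> ! q))"
    unfolding dp_program_def
  proof (intro exec_within_Seq[OF init_memory_spec] exec_within_Seq[OF fill_table_spec]
      exec_within_Seq[OF trace_spec])
    fix m assume inv: "trace_inv ob I (n1 I + n2 I) m"
    then have "m 2 = real (regs I)" "m (regs I + 4) = real (n1 I + n2 I)" "m (regs I + 23) = real (out_buf I)"
      by (simp_all add: trace_inv_def filled_def layout_ok_def)
    moreover have "\<forall>q < n1 I + n2 I. m (out_buf I + q) = enc_job (?\<pi> ! q)"
      using inv opt_seq_nth[of _ ob I "(0, 0, 0, 0)"] length_opt_seq[of ob I]
      by (simp add: trace_inv_def)
    ultimately show "exec_within copy_out m (1 + ((n1 I + n2 I - 3) * (2 + 1) + 1) + 3)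
        (\<lambda>m'. \<forall>q < n1 I + n2 I. m' q = enc_job (?\<pi> ! q))"
      by (rule copy_out_spec)
  qed
  then show ?thesis
  proof (rule exec_within_mono)
    show "?K \<le> 300 * dim I ^ 5"
      unfolding dim_def by (rule dp_program_steps)
  qed (use opt_seq_optimal in blast)
qed

end

theorem theorem1:
  fixes ob :: objective
  shows "\<exists>(P :: com) (c :: nat). \<forall>I :: inst. admissible I \<longrightarrow>
           (\<exists>k m'. exec P (input_mem I) k m'
              \<and> k \<le> c * (n1 I + n2 I + 1) ^ 5
              \<and> (\<exists>\<pi>. optimal_seq ob I \<pi>
                    \<and> (\<forall>i < n1 I + n2 I. m' i = enc_job (\<pi> ! i))))"
  using dp_program_spec[of ob] unfolding exec_within_def dim_def by blast

end
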